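(* Let $\Omega\subseteq\mathbb{F}$ be a P-closed set with P-bases $\mathcal{A},\mathcal{B}$, $n=\mathrm{Rk}(\Omega)$. Let $a^{(1)},\dots,a^{(\ell)}\in\mathbb{F}$ lie in pairwise distinct conjugacy classes such that $\mathcal{A}_i=\mathcal{A}\cap C(a^{(i)})$ and $\mathcal{B}_i=\mathcal{B}\cap C(a^{(i)})$ are non-empty for each $i$ and $\mathcal{A}=\bigcup_i\mathcal{A}_i$, $\mathcal{B}=\bigcup_i\mathcal{B}_i$. Then $\#\mathcal{A}_i=\#\mathcal{B}_i=:n_i$ and $n=n_1+\dots+n_\ell$. Write $\mathcal{A}_i=\{a^{(i)}_1,\dots,a^{(i)}_{n_i}\}$, $\mathcal{B}_i=\{b^{(i)}_1,\dots,b^{(i)}_{n_i}\}$ and pick $\alpha^{(i)}_j,\beta^{(i)}_j\in\mathbb{F}^*$ with $a^{(i)}_j=\mathcal{D}_{a^{(i)}}(\alpha^{(i)}_j)(\alpha^{(i)}_j)^{-1}$ and $b^{(i)}_j=\mathcal{D}_{a^{(i)}}(\beta^{(i)}_j)(\beta^{(i)}_j)^{-1}$. Define $\phi_\mathcal{A}:\mathbb{F}^\mathcal{A}\to\mathbb{F}^n$ by $\phi_\mathcal{A}(f)=(\mathbf{c}^{(1)},\dots,\mathbf{c}^{(\ell)})$, $\mathbf{c}^{(i)}\in\mathbb{F}^{n_i}$, $c^{(i)}_j=F^{\mathcal{D}_{a^{(i)}}}(\alpha^{(i)}_j)$, where $F\in\mathbb{F}[x;\sigma,\delta]_n$ is the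 unique polynomial with $E_\mathcal{A}(F)=f$; define $\phi_\mathcal{B}$ analogously using the $\beta^{(i)}_j$. Then for each $i$ there is an invertible $M_i\in K_{a^{(i)}}^{n_i\times n_i}$ with $(\beta^{(i)}_1,\dots,\beta^{(i)}_{n_i})=(\alpha^{(i)}_1,\dots,\alpha^{(i)}_{n_i})M_i$; letting $M=\mathrm{diag}(M_1,\dots,M_\ell)$ and $\pi_M(\mathbf{c})=\mathbf{c}M$, the maps $\phi_\mathcal{A},\phi_\mathcal{B},\pi_{\mathcal{A},\mathcal{B}},\pi_M$ are left vector space isomorphisms and $\phi_\mathcal{B}\circ\pi_{\mathcal{A},\mathcal{B}}=\pi_M\circ\phi_\mathcal{A}$.
   Context: $\mathbb{F}$ is a division ring, $\sigma$ a ring endomorphism, $\delta$ a $\sigma$-derivation ($\delta$ additive, $\delta(ab)=\sigma(a)\delta(b)+\delta(a)b$); $\mathbb{F}[x;\sigma,\delta]$ the skew polynomial ring (left $\mathbb{F}$-space with basis $x^i$, $xa=\sigma(a)x+\delta(a)$), $\mathbb{F}[x;\sigma,\delta]_n$ the elements of degree $<n$; evaluation $F(a)$ defined by $F-F(a)\in\mathbb{F}[x;\sigma,\delta](x-a)$, $E_\mathcal{A}(F)=(a\mapsto F(a))\in\mathbb{F}^\mathcal{A}$. P-closure $\overline\Omega$ is the common zero set of all skew polynomials vanishing on $\Omega$; P-closed, P-independent (no element in the P-closure of the others), P-basis (P-independent subset whose P-closure is $\Omega$); $\mathrm{Rk}(\Omega)$ the common size of P-bases; $E_\mathcal{A}$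 is a bijection $\mathbb{F}[x;\sigma,\delta]_n\to\mathbb{F}^\mathcal{A}$. $\pi_{\mathcal{A},\mathcal{B}}(E_\mathcal{A}(F))=E_\mathcal{B}(F)$. For $a\in\mathbb{F}$: $\mathcal{D}_a(b)=\sigma(b)a+\delta(b)$, $\mathcal{D}_a^i$ its $i$-fold composition ($\mathcal{D}_a^0=\mathrm{Id}$); for $F=\sum_iF_ix^i$, $F^{\mathcal{D}_a}(b)=\sum_iF_i\mathcal{D}_a^i(b)$; $K_a=\{b:\mathcal{D}_a(b)=ab\}$ (a division subring); $C(a)=\{\mathcal{D}_a(b)b^{-1}:b\in\mathbb{F}^*\}$. *)

theory Defs
  imports Main
begin

definition ring_endo :: "('a::division_ring \<Rightarrow> 'a) \<Rightarrow> bool" where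
  "ring_endo \<sigma> \<longleftrightarrow> (\<forall>x y. \<sigma> (x + y) = \<sigma> x + \<sigma> y) \<and> (\<forall>x y. \<sigma> (x * y) = \<sigma> x * \<sigma> y) \<and> \<sigma> 1 = 1"

definition sigma_derivation :: "('a::division_ring \<Rightarrow> 'a) \<Rightarrow> ('a \<Rightarrow> 'a) \<Rightarrow> bool" where
  "sigma_derivation \<sigma> \<delta> \<longleftrightarrow> (\<forall>x y. \<delta> (x + y) = \<delta> x + \<delta> y) \<and>
     (\<forall>x y. \<delta> (x * y) = \<sigma> x * \<delta> y + \<delta> x * y)"

section \<open>Skew polynomials F[x;sigma,delta], as coefficient sequences (F i = coefficient of x^i, on the left)\<close>

definition skpolys :: "(nat \<Rightarrow> 'a::zero) set" where
  "skpolys = {F. finite {i. F i \<noteq> 0}}"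

definition skpolys_lt :: "nat \<Rightarrow> (nat \<Rightarrow> 'a::zero) set" where
  "skpolys_lt n = {F. \<forall>i\<ge>n. F i = 0}"

definition skconst :: "'a::zero \<Rightarrow> nat \<Rightarrow> 'a" where
  "skconst c = (\<lambda>k. if k = 0 then c else 0)"

definition skXminus :: "'a::division_ring \<Rightarrow> nat \<Rightarrow> 'a" where
  "skXminus a = (\<lambda>k. if k = 0 then - a else if k = 1 then 1 else 0)"

text \<open>Left multiplication by x, using x b = sigma(b) x + delta(b).\<close>
definition skxmul :: "('a::division_ring \<Rightarrow> 'a) \<Rightarrow> ('a \<Rightarrow> 'a) \<Rightarrow> (nat \<Rightarrow> 'a) \<Rightarrow> nat \<Rightarrow> 'a" where
  "skxmul \<sigma> \<delta> G = (\<lambda>k. (if k = 0 then 0 else \<sigma> (G (k - 1))) + \<delta> (G k))"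

definition skmult :: "('a::division_ring \<Rightarrow> 'a) \<Rightarrow> ('a \<Rightarrow> 'a) \<Rightarrow> (nat \<Rightarrow> 'a) \<Rightarrow> (nat \<Rightarrow> 'a) \<Rightarrow> nat \<Rightarrow> 'a" where
  "skmult \<sigma> \<delta> F G = (\<lambda>k. \<Sum>i\<in>{i. F i \<noteq> 0}. F i * (skxmul \<sigma> \<delta> ^^ i) G k)"

definition skeval :: "('a::division_ring \<Rightarrow> 'a) \<Rightarrow> ('a \<Rightarrow> 'a) \<Rightarrow> (nat \<Rightarrow> 'a) \<Rightarrow> 'a \<Rightarrow> 'a" where
  "skeval \<sigma> \<delta> F a = (THE c. \<exists>G\<in>skpolys. (\<lambda>k. F k - skconst c k) = skmult \<sigma> \<delta> G (skXminus a))"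

text \<open>F^A, as functions vanishing outside A, and the evaluation map E_A.\<close>
definition funspace :: "'b set \<Rightarrow> ('b \<Rightarrow> 'a::zero) set" where
  "funspace A = {f. \<forall>x. x \<notin> A \<longrightarrow> f x = 0}"

definition Eval_on :: "('a::division_ring \<Rightarrow> 'a) \<Rightarrow> ('a \<Rightarrow> 'a) \<Rightarrow> 'a set \<Rightarrow> (nat \<Rightarrow> 'a) \<Rightarrow> 'a \<Rightarrow> 'a" where
  "Eval_on \<sigma> \<delta> A F = (\<lambda>b. if b \<in> A then skeval \<sigma> \<delta> F b else 0)"

definition P_closure :: "('a::division_ring \<Rightarrow> 'a) \<Rightarrow> ('a \<Rightarrow> 'a) \<Rightarrow> 'a set \<Rightarrow> 'a set" where
  "P_closure \<sigma> \<delta> \<Omega> = {b. \<forall>F\<in>skpolys. (\<forall>c\<in>\<Omega>. skeval \<sigma> \<delta> F c = 0) \<longrightarrow> skeval \<sigma> \<delta> F b = 0}"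

definition P_closed :: "('a::division_ring \<Rightarrow> 'a) \<Rightarrow> ('a \<Rightarrow> 'a) \<Rightarrow> 'a set \<Rightarrow> bool" where
  "P_closed \<sigma> \<delta> \<Omega> \<longleftrightarrow> P_closure \<sigma> \<delta> \<Omega> = \<Omega>"

definition P_independent :: "('a::division_ring \<Rightarrow> 'a) \<Rightarrow> ('a \<Rightarrow> 'a) \<Rightarrow> 'a set \<Rightarrow> bool" where
  "P_independent \<sigma> \<delta> A \<longleftrightarrow> (\<forall>b\<in>A. b \<notin> P_closure \<sigma> \<delta> (A - {b}))"

definition P_basis :: "('a::division_ring \<Rightarrow> 'a) \<Rightarrow> ('a \<Rightarrow> 'a) \<Rightarrow> 'a set \<Rightarrow> 'a set \<Rightarrow> bool" where
  "P_basis \<sigma> \<delta> \<Omega> A \<longleftrightarrow> A \<subseteq> \<Omega> \<and> P_independent \<sigma> \<delta> A \<and> P_closure \<sigma> \<delta> A = \<Omega>"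

text \<open>Rank: the (common) size of a P-basis.\<close>
definition Rk :: "('a::division_ring \<Rightarrow> 'a) \<Rightarrow> ('a \<Rightarrow> 'a) \<Rightarrow> 'a set \<Rightarrow> nat" where
  "Rk \<sigma> \<delta> \<Omega> = card (SOME A. P_basis \<sigma> \<delta> \<Omega> A)"

definition Dop :: "('a::division_ring \<Rightarrow> 'a) \<Rightarrow> ('a \<Rightarrow> 'a) \<Rightarrow> 'a \<Rightarrow> 'a \<Rightarrow> 'a" where
  "Dop \<sigma> \<delta> a b = \<sigma> b * a + \<delta> b"

definition Dapply :: "('a::division_ring \<Rightarrow> 'a) \<Rightarrow> ('a \<Rightarrow> 'a) \<Rightarrow> (nat \<Rightarrow> 'a) \<Rightarrow> 'a \<Rightarrow> 'a \<Rightarrow> 'a" where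
  "Dapply \<sigma> \<delta> F a b = (\<Sum>i\<in>{i. F i \<noteq> 0}. F i * (Dop \<sigma> \<delta> a ^^ i) b)"

definition Kset :: "('a::division_ring \<Rightarrow> 'a) \<Rightarrow> ('a \<Rightarrow> 'a) \<Rightarrow> 'a \<Rightarrow> 'a set" where
  "Kset \<sigma> \<delta> a = {b. Dop \<sigma> \<delta> a b = a * b}"

definition Cls :: "('a::division_ring \<Rightarrow> 'a) \<Rightarrow> ('a \<Rightarrow> 'a) \<Rightarrow> 'a \<Rightarrow> 'a set" where
  "Cls \<sigma> \<delta> a = {Dop \<sigma> \<delta> a b * inverse b | b. b \<noteq> 0}"

definition interp :: "('a::division_ring \<Rightarrow> 'a) \<Rightarrow> ('a \<Rightarrow> 'a) \<Rightarrow> 'a set \<Rightarrow> nat \<Rightarrow> ('a \<Rightarrow> 'a) \<Rightarrow> nat \<Rightarrow> 'a" where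
  "interp \<sigma> \<delta> A n f = (THE F. F \<in> skpolys_lt n \<and> Eval_on \<sigma> \<delta> A F = f)"

definition pi_AB :: "('a::division_ring \<Rightarrow> 'a) \<Rightarrow> ('a \<Rightarrow> 'a) \<Rightarrow> 'a set \<Rightarrow> 'a set \<Rightarrow> nat \<Rightarrow> ('a \<Rightarrow> 'a) \<Rightarrow> 'a \<Rightarrow> 'a" where
  "pi_AB \<sigma> \<delta> A B n f = Eval_on \<sigma> \<delta> B (interp \<sigma> \<delta> A n f)"

text \<open>F^n = F^{n_1} x ... x F^{n_l}, coordinates indexed by block (i,j), i < l, j < n_i.\<close>
definition blockvecs :: "nat \<Rightarrow> (nat \<Rightarrow> nat) \<Rightarrow> (nat \<times> nat \<Rightarrow> 'a::zero) set" where
  "blockvecs l nn = {c. \<forall>i j. \<not> (i < l \<and> j < nn i) \<longrightarrow> c (i, j) = 0}"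

definition phi :: "('a::division_ring \<Rightarrow> 'a) \<Rightarrow> ('a \<Rightarrow> 'a) \<Rightarrow> nat \<Rightarrow> (nat \<Rightarrow> 'a) \<Rightarrow> 'a set
     \<Rightarrow> (nat \<Rightarrow> nat \<Rightarrow> 'a) \<Rightarrow> nat \<Rightarrow> ('a \<Rightarrow> 'a) \<Rightarrow> nat \<times> nat \<Rightarrow> 'a" where
  "phi \<sigma> \<delta> l a X \<alpha> n f = (\<lambda>(i, j). if i < l \<and> j < card (X \<inter> Cls \<sigma> \<delta> (a i))
      then Dapply \<sigma> \<delta> (interp \<sigma> \<delta> X n f) (a i) (\<alpha> i j) else 0)"

text \<open>pi_M(c) = c M with M = diag(M_1,...,M_l).\<close>
definition piM :: "nat \<Rightarrow> (nat \<Rightarrow> nat) \<Rightarrow> (nat \<Rightarrow> nat \<Rightarrow> nat \<Rightarrow> 'a::division_ring) \<Rightarrow> (nat \<times> nat \<Rightarrow> 'a) \<Rightarrow> nat \<times> nat \<Rightarrow> 'a" where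
  "piM l nn M c = (\<lambda>(i, k). if i < l \<and> k < nn i then (\<Sum>j<nn i. c (i, j) * M i j k) else 0)"

definition inv_matrix_in :: "'a::division_ring set \<Rightarrow> nat \<Rightarrow> (nat \<Rightarrow> nat \<Rightarrow> 'a) \<Rightarrow> bool" where
  "inv_matrix_in K m Mi \<longleftrightarrow> (\<forall>j<m. \<forall>k<m. Mi j k \<in> K) \<and>
     (\<exists>N. (\<forall>j<m. \<forall>k<m. N j k \<in> K) \<and>
        (\<forall>j<m. \<forall>k<m. (\<Sum>l<m. Mi j l * N l k) = (if j = k then 1 else 0)) \<and>
        (\<forall>j<m. \<forall>k<m. (\<Sum>l<m. N j l * Mi l k) = (if j = k then 1 else 0)))"

definition left_iso :: "('b \<Rightarrow> 'a::division_ring) set \<Rightarrow> ('c \<Rightarrow> 'a) set \<Rightarrow> (('b \<Rightarrow> 'a) \<Rightarrow> ('c \<Rightarrow> 'a)) \<Rightarrow> bool" where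
  "left_iso V W h \<longleftrightarrow> bij_betw h V W \<and>
     (\<forall>f\<in>V. \<forall>g\<in>V. h (\<lambda>x. f x + g x) = (\<lambda>y. h f y + h g y)) \<and>
     (\<forall>c. \<forall>f\<in>V. h (\<lambda>x. c * f x) = (\<lambda>y. c * h f y))"

end

theory Submission
  imports Defs
begin

text \<open>
  Everything is reduced to the operators \<open>\<D>\<^sub>a\<close>: by the product theorem
  \<open>F\<^sup>\<D>\<^sup>\<^sub>a(\<beta>) = F(\<D>\<^sub>a(\<beta>)\<beta>\<^sup>-\<^sup>1) \<beta>\<close>, and \<open>F\<^sup>\<D>\<^sup>\<^sub>a\<close> is right \<open>K\<^sub>a\<close>-linear.
  Hence inside one conjugacy class \<open>C(a)\<close> a P-independent set \<open>{\<D>\<^sub>a(\<alpha>\<^sub>j)\<alpha>\<^sub>j\<^sup>-\<^sup>1}\<close> corresponds to a right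
  \<open>K\<^sub>a\<close>-independent family \<open>(\<alpha>\<^sub>j)\<close>, and \<open>\<D>\<^sub>a(\<beta>)\<beta>\<^sup>-\<^sup>1\<close> lies in the P-closure of a finite set \<open>W\<close> iff
  \<open>\<beta>\<close> lies in the right \<open>K\<^sub>a\<close>-span of the \<open>\<alpha>\<^sub>j\<close> enumerating \<open>W \<inter> C(a)\<close>; the other conjugacy classes
  are split off by a minimal polynomial that has no root in \<open>C(a)\<close>.
  So the two enumerations of a class are related by an invertible matrix over \<open>K\<^sub>a\<close>, and
  \<open>\<phi>\<close> is just "evaluate and multiply by \<open>\<alpha>\<^sub>j\<close>", which turns the change of P-basis into \<open>c \<mapsto> c M\<close>.
\<close>

locale skew =
  fixes \<sigma> \<delta> :: "'a::division_ring \<Rightarrow> 'a"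
  assumes endo: "ring_endo \<sigma>" and der: "sigma_derivation \<sigma> \<delta>"
begin

lemma sigma_add: "\<sigma> (x + y) = \<sigma> x + \<sigma> y"
  using endo by (simp add: ring_endo_def)

lemma sigma_mult: "\<sigma> (x * y) = \<sigma> x * \<sigma> y"
  using endo by (simp add: ring_endo_def)

lemma sigma_one [simp]: "\<sigma> 1 = 1"
  using endo by (simp add: ring_endo_def)

lemma sigma_zero [simp]: "\<sigma> 0 = 0"
  using sigma_add[of 0 0] by simp

lemma sigma_nonzero: "x \<noteq> 0 \<Longrightarrow> \<sigma> x \<noteq> 0"
  using sigma_mult[of x "inverse x"] by auto

lemma delta_add: "\<delta> (x + y) = \<delta> x + \<delta> y"
  using der by (simp add: sigma_derivation_def)

lemma delta_mult: "\<delta> (x * y) = \<sigma> x * \<delta> y + \<delta> x * y"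
  using der by (simp add: sigma_derivation_def)

lemma delta_zero [simp]: "\<delta> 0 = 0"
  using delta_add[of 0 0] by simp

abbreviation D where "D \<equiv> Dop \<sigma> \<delta>"

lemma D_add: "D a (x + y) = D a x + D a y"
  by (simp add: Dop_def sigma_add delta_add algebra_simps)

lemma D_zero [simp]: "D a 0 = 0"
  by (simp add: Dop_def)

lemma D_one [simp]: "D a 1 = a"
  using delta_mult[of 1 1] by (simp add: Dop_def)

lemma D_mult: "D a (x * y) = \<sigma> x * D a y + \<delta> x * y"
  by (simp add: Dop_def sigma_mult delta_mult algebra_simps)

lemma D_diff: "D a (x - y) = D a x - D a y"
  using D_add[of a "x - y" y] by (simp add: algebra_simps)

lemma D_sum: "D a (\<Sum>j\<in>J. g j) = (\<Sum>j\<in>J. D a (g j))"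
  using sum_comp_morphism[of "D a" g J, OF D_zero D_add] by (simp add: o_def)

lemma D_power_add: "(D a ^^ i) (x + y) = (D a ^^ i) x + (D a ^^ i) y"
  by (induction i) (simp_all add: D_add)

lemma D_power_zero [simp]: "(D a ^^ i) 0 = 0"
  by (induction i) simp_all

lemma D_power_diff: "(D a ^^ i) (x - y) = (D a ^^ i) x - (D a ^^ i) y"
  by (induction i) (simp_all add: D_diff)

lemma Kset_iff: "k \<in> Kset \<sigma> \<delta> a \<longleftrightarrow> D a k = a * k"
  by (simp add: Kset_def)

lemma D_mult_Kset:
  assumes "k \<in> Kset \<sigma> \<delta> a"
  shows "D a (w * k) = D a w * k"
proof -
  have "D a (w * k) = \<sigma> w * (a * k) + \<delta> w * k"
    using assms by (simp add: D_mult Kset_iff)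
  then show ?thesis by (simp add: Dop_def algebra_simps)
qed

lemma D_power_mult_Kset: "k \<in> Kset \<sigma> \<delta> a \<Longrightarrow> (D a ^^ i) (w * k) = (D a ^^ i) w * k"
  by (induction i) (simp_all add: D_mult_Kset)

lemma Kset_zero [simp]: "0 \<in> Kset \<sigma> \<delta> a"
  by (simp add: Kset_iff)

lemma Kset_one [simp]: "1 \<in> Kset \<sigma> \<delta> a"
  by (simp add: Kset_iff)

lemma Kset_add: "x \<in> Kset \<sigma> \<delta> a \<Longrightarrow> y \<in> Kset \<sigma> \<delta> a \<Longrightarrow> x + y \<in> Kset \<sigma> \<delta> a"
  by (simp add: Kset_iff D_add algebra_simps)

lemma Kset_diff: "x \<in> Kset \<sigma> \<delta> a \<Longrightarrow> y \<in> Kset \<sigma> \<delta> a \<Longrightarrow> x - y \<in> Kset \<sigma> \<delta> a"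
  by (simp add: Kset_iff D_diff algebra_simps)

lemma Kset_mult: "x \<in> Kset \<sigma> \<delta> a \<Longrightarrow> y \<in> Kset \<sigma> \<delta> a \<Longrightarrow> x * y \<in> Kset \<sigma> \<delta> a"
  using D_mult_Kset[of y a x] by (simp add: Kset_iff mult.assoc)

lemma Kset_sum: "(\<And>j. j \<in> J \<Longrightarrow> g j \<in> Kset \<sigma> \<delta> a) \<Longrightarrow> (\<Sum>j\<in>J. g j) \<in> Kset \<sigma> \<delta> a"
  by (induction J rule: infinite_finite_induct) (auto intro: Kset_add)

end

lemma skpolys_lt_mono: "F \<in> skpolys_lt N \<Longrightarrow> N \<le> M \<Longrightarrow> F \<in> skpolys_lt M"
  by (simp add: skpolys_lt_def)

lemma skpolys_lt_nonzero_subset: "F \<in> skpolys_lt N \<Longrightarrow> {i. F i \<noteq> 0} \<subseteq> {..<N}"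
  by (auto simp: skpolys_lt_def not_less[symmetric])

lemma skpolys_lt_imp_skpolys: "F \<in> skpolys_lt N \<Longrightarrow> F \<in> skpolys"
  unfolding skpolys_def using skpolys_lt_nonzero_subset finite_subset by blast

lemma skpolys_obtain_lt:
  assumes "F \<in> skpolys"
  obtains N where "F \<in> skpolys_lt N"
proof -
  obtain N where "\<forall>i\<in>{i. F i \<noteq> 0}. i < N"
    using assms finite_nat_set_iff_bounded by (auto simp: skpolys_def)
  then have "F \<in> skpolys_lt N" by (fastforce simp: skpolys_lt_def)
  then show thesis by (rule that)
qed

lemma sum_nonzero_coeffs_lt:
  fixes F g :: "nat \<Rightarrow> 'a::semiring_0"
  assumes "F \<in> skpolys_lt N"
  shows "(\<Sum>i\<in>{i. F i \<noteq> 0}. F i * g i) = (\<Sum>i<N. F i * g i)"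
  by (rule sum.mono_neutral_left) (use skpolys_lt_nonzero_subset[OF assms] in auto)

lemma skconst_lt: "skconst c \<in> skpolys_lt 1"
  by (simp add: skpolys_lt_def skconst_def)

lemma skXminus_lt: "skXminus c \<in> skpolys_lt 2"
  by (simp add: skpolys_lt_def skXminus_def)

context skew
begin

abbreviation X where "X \<equiv> skxmul \<sigma> \<delta>"

lemma Dapply_lt: "F \<in> skpolys_lt N \<Longrightarrow> Dapply \<sigma> \<delta> F a b = (\<Sum>i<N. F i * (D a ^^ i) b)"
  unfolding Dapply_def by (rule sum_nonzero_coeffs_lt)

lemma skmult_lt: "G \<in> skpolys_lt N \<Longrightarrow> skmult \<sigma> \<delta> G H = (\<lambda>k. \<Sum>i<N. G i * (X ^^ i) H k)"
  unfolding skmult_def by (rule ext, rule sum_nonzero_coeffs_lt)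

lemma skmult_zero_left: "skmult \<sigma> \<delta> (\<lambda>_. 0) H = (\<lambda>_. 0)"
  by (simp add: skmult_def)

lemma Dapply_point_add: "Dapply \<sigma> \<delta> F a (x + y) = Dapply \<sigma> \<delta> F a x + Dapply \<sigma> \<delta> F a y"
  by (simp add: Dapply_def D_power_add distrib_left sum.distrib)

lemma Dapply_point_zero [simp]: "Dapply \<sigma> \<delta> F a 0 = 0"
  by (simp add: Dapply_def)

lemma Dapply_point_diff: "Dapply \<sigma> \<delta> F a (x - y) = Dapply \<sigma> \<delta> F a x - Dapply \<sigma> \<delta> F a y"
  by (simp add: Dapply_def D_power_diff right_diff_distrib sum_subtractf)

lemma Dapply_point_sum: "Dapply \<sigma> \<delta> F a (\<Sum>j\<in>J. g j) = (\<Sum>j\<in>J. Dapply \<sigma> \<delta> F a (g j))"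
  using sum_comp_morphism[of "Dapply \<sigma> \<delta> F a" g J, OF Dapply_point_zero Dapply_point_add]
  by (simp add: o_def)

lemma Dapply_point_mult_Kset:
  "k \<in> Kset \<sigma> \<delta> a \<Longrightarrow> Dapply \<sigma> \<delta> F a (w * k) = Dapply \<sigma> \<delta> F a w * k"
  by (simp add: Dapply_def D_power_mult_Kset sum_distrib_right mult.assoc)

lemma Dapply_point_right_comb:
  assumes "\<forall>j<m. k j \<in> Kset \<sigma> \<delta> a"
  shows "Dapply \<sigma> \<delta> F a (\<Sum>j<m. \<beta> j * k j) = (\<Sum>j<m. Dapply \<sigma> \<delta> F a (\<beta> j) * k j)"
  using assms by (simp add: Dapply_point_sum Dapply_point_mult_Kset)

lemma Dapply_sum:
  assumes "finite I" "\<And>i. i \<in> I \<Longrightarrow> G i \<in> skpolys_lt N"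
  shows "Dapply \<sigma> \<delta> (\<lambda>k. \<Sum>i\<in>I. c i * G i k) a y = (\<Sum>i\<in>I. c i * Dapply \<sigma> \<delta> (G i) a y)"
proof -
  have "(\<lambda>k. \<Sum>i\<in>I. c i * G i k) \<in> skpolys_lt N"
    using assms by (simp add: skpolys_lt_def)
  then have "Dapply \<sigma> \<delta> (\<lambda>k. \<Sum>i\<in>I. c i * G i k) a y = (\<Sum>k<N. (\<Sum>i\<in>I. c i * G i k) * (D a ^^ k) y)"
    by (rule Dapply_lt)
  also have "\<dots> = (\<Sum>i\<in>I. c i * (\<Sum>k<N. G i k * (D a ^^ k) y))"
    by (simp add: sum_distrib_right sum_distrib_left mult.assoc sum.swap[of _ I])
  also have "\<dots> = (\<Sum>i\<in>I. c i * Dapply \<sigma> \<delta> (G i) a y)"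
    by (rule sum.cong) (simp_all add: Dapply_lt[OF assms(2)])
  finally show ?thesis .
qed

lemma Dapply_linear:
  assumes "F \<in> skpolys_lt N" "G \<in> skpolys_lt N"
  shows "Dapply \<sigma> \<delta> (\<lambda>k. u * F k + v * G k) a y = u * Dapply \<sigma> \<delta> F a y + v * Dapply \<sigma> \<delta> G a y"
  using Dapply_sum[of "{0, 1::nat}" "\<lambda>i. if i = 0 then F else G" N "\<lambda>i. if i = 0 then u else v"] assms
  by simp

lemma Dapply_lt1: "F \<in> skpolys_lt 1 \<Longrightarrow> Dapply \<sigma> \<delta> F a y = F 0 * y"
  by (simp add: Dapply_lt)

lemma Dapply_skconst_one: "Dapply \<sigma> \<delta> (skconst 1) c y = y"
  by (subst Dapply_lt1[OF skconst_lt]) (simp add: skconst_def)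

lemma skxmul_lt: "H \<in> skpolys_lt N \<Longrightarrow> X H \<in> skpolys_lt (Suc N)"
  by (auto simp: skpolys_lt_def skxmul_def)

lemma skxmul_power_lt: "H \<in> skpolys_lt N \<Longrightarrow> (X ^^ m) H \<in> skpolys_lt (N + m)"
  by (induction m) (simp_all add: skxmul_lt)

lemma skxmul_lead: "H \<in> skpolys_lt (Suc d) \<Longrightarrow> X H (Suc d) = \<sigma> (H d)"
  by (simp add: skpolys_lt_def skxmul_def)

lemma skxmul_power_lead:
  assumes "H \<in> skpolys_lt (Suc d)" "H d = 1"
  shows "(X ^^ m) H (d + m) = 1"
proof (induction m)
  case (Suc m)
  have "(X ^^ m) H \<in> skpolys_lt (Suc (d + m))"
    using skxmul_power_lt[OF assms(1), of m] by simp
  then show ?case using Suc by (simp add: skxmul_lead)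
qed (use assms in simp)

lemma Dapply_skxmul:
  assumes H: "H \<in> skpolys_lt N"
  shows "Dapply \<sigma> \<delta> (X H) a b = D a (Dapply \<sigma> \<delta> H a b)"
proof -
  have "Dapply \<sigma> \<delta> (X H) a b
      = (\<Sum>k<Suc N. (if k = 0 then 0 else \<sigma> (H (k - 1)) * (D a ^^ k) b))
        + (\<Sum>k<Suc N. \<delta> (H k) * (D a ^^ k) b)"
    unfolding Dapply_lt[OF skxmul_lt[OF H]] sum.distrib[symmetric]
    by (rule sum.cong) (simp_all add: skxmul_def distrib_right)
  also have "(\<Sum>k<Suc N. (if k = 0 then 0 else \<sigma> (H (k - 1)) * (D a ^^ k) b))
      = (\<Sum>k<N. \<sigma> (H k) * (D a ^^ Suc k) b)"
    by (subst sum.lessThan_Suc_shift) simp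
  also have "(\<Sum>k<Suc N. \<delta> (H k) * (D a ^^ k) b) = (\<Sum>k<N. \<delta> (H k) * (D a ^^ k) b)"
    using H by (simp add: skpolys_lt_def)
  also have "(\<Sum>k<N. \<sigma> (H k) * (D a ^^ Suc k) b) + (\<Sum>k<N. \<delta> (H k) * (D a ^^ k) b)
      = (\<Sum>k<N. D a (H k * (D a ^^ k) b))"
    by (simp add: D_mult sum.distrib)
  also have "\<dots> = D a (Dapply \<sigma> \<delta> H a b)"
    by (simp add: D_sum Dapply_lt[OF H])
  finally show ?thesis .
qed

lemma Dapply_skxmul_power:
  "H \<in> skpolys_lt N \<Longrightarrow> Dapply \<sigma> \<delta> ((X ^^ m) H) a b = (D a ^^ m) (Dapply \<sigma> \<delta> H a b)"
  by (induction m) (simp_all add: Dapply_skxmul[OF skxmul_power_lt])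

lemma skmult_in_skpolys_lt:
  assumes G: "G \<in> skpolys_lt N" and H: "H \<in> skpolys_lt M"
  shows "skmult \<sigma> \<delta> G H \<in> skpolys_lt (M + N)"
proof -
  have "\<forall>i<N. (X ^^ i) H \<in> skpolys_lt (M + N)"
    by (auto intro!: skpolys_lt_mono[OF skxmul_power_lt[OF H]])
  then show ?thesis by (simp add: skmult_lt[OF G] skpolys_lt_def)
qed

lemma skmult_skpolys:
  "G \<in> skpolys_lt N \<Longrightarrow> H \<in> skpolys_lt M \<Longrightarrow> skmult \<sigma> \<delta> G H \<in> skpolys"
  by (rule skpolys_lt_imp_skpolys[OF skmult_in_skpolys_lt])

lemma Dapply_skmult:
  assumes G: "G \<in> skpolys_lt N" and H: "H \<in> skpolys_lt M"
  shows "Dapply \<sigma> \<delta> (skmult \<sigma> \<delta> G H) a b = Dapply \<sigma> \<delta> G a (Dapply \<sigma> \<delta> H a b)"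
proof -
  have "Dapply \<sigma> \<delta> (skmult \<sigma> \<delta> G H) a b = (\<Sum>i<N. G i * Dapply \<sigma> \<delta> ((X ^^ i) H) a b)"
    unfolding skmult_lt[OF G]
    by (rule Dapply_sum[where N="M + N"]) (auto intro!: skpolys_lt_mono[OF skxmul_power_lt[OF H]])
  then show ?thesis
    by (simp add: Dapply_skxmul_power[OF H] Dapply_lt[OF G])
qed

lemma Dapply_skXminus: "Dapply \<sigma> \<delta> (skXminus c) a y = D a y - c * y"
  by (subst Dapply_lt[OF skXminus_lt]) (simp add: skXminus_def numeral_2_eq_2)

lemma skmult_skXminus: "skmult \<sigma> \<delta> (skXminus c) P = (\<lambda>k. X P k - c * P k)"
  by (subst skmult_lt[OF skXminus_lt]) (simp add: skXminus_def numeral_2_eq_2)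

lemma skpoly_division:
  assumes P: "P \<in> skpolys_lt (Suc d)" "P d = 1"
  shows "F \<in> skpolys_lt N \<Longrightarrow> \<exists>Q R. Q \<in> skpolys_lt (N - d) \<and> R \<in> skpolys_lt d \<and>
            F = (\<lambda>k. skmult \<sigma> \<delta> Q P k + R k)"
proof (induction N arbitrary: F)
  case 0
  then show ?case
    by (intro exI[of _ "\<lambda>_. 0"] exI[of _ F]) (auto simp: skmult_zero_left skpolys_lt_def)
next
  case (Suc m)
  show ?case
  proof (cases "m < d")
    case True
    then show ?thesis using Suc.prems
      by (intro exI[of _ "\<lambda>_. 0"] exI[of _ F]) (auto simp: skmult_zero_left skpolys_lt_def)
  next
    case False
    \<comment> \<open>subtract \<open>F\<^sub>m x\<^sup>m\<^sup>-\<^sup>d P\<close> to kill the leading coefficient\<close>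
    define c where "c = F m"
    define Y where "Y = (X ^^ (m - d)) P"
    have Ylt: "Y \<in> skpolys_lt (Suc m)"
      using skxmul_power_lt[OF P(1), of "m - d"] False by (simp add: Y_def)
    have Ym: "Y m = 1"
      using skxmul_power_lead[OF P, of "m - d"] False by (simp add: Y_def)
    have "(\<lambda>k. F k - c * Y k) \<in> skpolys_lt m"
      unfolding skpolys_lt_def
    proof (intro CollectI allI impI)
      fix k assume "k \<ge> m"
      then consider "k = m" | "k \<ge> Suc m" by linarith
      then show "F k - c * Y k = 0"
        by cases (use Suc.prems Ylt Ym in \<open>simp_all add: c_def skpolys_lt_def\<close>)
    qed
    from Suc.IH[OF this] obtain Q' R' where Q': "Q' \<in> skpolys_lt (m - d)"
      and R': "R' \<in> skpolys_lt d" and eq: "(\<lambda>k. F k - c * Y k) = (\<lambda>k. skmult \<sigma> \<delta> Q' P k + R' k)"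
      by blast
    define Q where "Q = (\<lambda>i. if i = m - d then c else Q' i)"
    have Qlt: "Q \<in> skpolys_lt (Suc (m - d))"
      using Q' by (auto simp: skpolys_lt_def Q_def)
    have "skmult \<sigma> \<delta> Q P = (\<lambda>k. \<Sum>i<Suc (m - d). Q i * (X ^^ i) P k)"
      by (rule skmult_lt[OF Qlt])
    also have "\<dots> = (\<lambda>k. (\<Sum>i<m - d. Q' i * (X ^^ i) P k) + c * Y k)"
      by (simp add: Q_def Y_def)
    also have "\<dots> = (\<lambda>k. skmult \<sigma> \<delta> Q' P k + c * Y k)"
      by (simp add: skmult_lt[OF Q'])
    finally have "F = (\<lambda>k. skmult \<sigma> \<delta> Q P k + R' k)"
      using eq by (simp add: fun_eq_iff algebra_simps)
    then show ?thesis
      using Qlt R' False by (intro exI[of _ Q] exI[of _ R']) (simp add: Suc_diff_le)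
  qed
qed

lemma skeval_eq_Dapply:
  assumes F: "F \<in> skpolys"
  shows "skeval \<sigma> \<delta> F c = Dapply \<sigma> \<delta> F c 1"
proof -
  obtain N where FN: "F \<in> skpolys_lt N" using F by (rule skpolys_obtain_lt)
  have "skXminus c \<in> skpolys_lt (Suc 1)" "skXminus c 1 = 1"
    by (simp_all add: skXminus_def skpolys_lt_def)
  from skpoly_division[OF this FN] obtain Q R where Q: "Q \<in> skpolys_lt (N - 1)"
    and R: "R \<in> skpolys_lt 1" and eq: "F = (\<lambda>k. skmult \<sigma> \<delta> Q (skXminus c) k + R k)"
    by blast
  have vanish: "Dapply \<sigma> \<delta> (skmult \<sigma> \<delta> G (skXminus c)) c 1 = 0" if "G \<in> skpolys_lt M" for G M
    using Dapply_skmult[OF that skXminus_lt] by (simp add: Dapply_skXminus)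
  define L where "L = 2 + (N - 1) + 1"
  have QP: "skmult \<sigma> \<delta> Q (skXminus c) \<in> skpolys_lt L"
    unfolding L_def by (rule skpolys_lt_mono[OF skmult_in_skpolys_lt[OF Q skXminus_lt]]) simp
  have R': "R \<in> skpolys_lt L"
    unfolding L_def by (rule skpolys_lt_mono[OF R]) simp
  have "Dapply \<sigma> \<delta> F c 1 = Dapply \<sigma> \<delta> (\<lambda>k. 1 * skmult \<sigma> \<delta> Q (skXminus c) k + 1 * R k) c 1"
    by (subst eq) simp
  also have "\<dots> = R 0"
    by (simp only: Dapply_linear[OF QP R'] vanish[OF Q] Dapply_lt1[OF R]) simp
  finally have r: "Dapply \<sigma> \<delta> F c 1 = R 0" .
  show ?thesis unfolding skeval_def
  proof (rule the_equality)
    have "(\<lambda>k. F k - skconst (R 0) k) = skmult \<sigma> \<delta> Q (skXminus c)"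
      using R by (subst eq) (auto simp: skpolys_lt_def skconst_def fun_eq_iff)
    then show "\<exists>G\<in>skpolys. (\<lambda>k. F k - skconst (Dapply \<sigma> \<delta> F c 1) k) = skmult \<sigma> \<delta> G (skXminus c)"
      using r skpolys_lt_imp_skpolys[OF Q] by auto
  next
    fix r' assume "\<exists>G\<in>skpolys. (\<lambda>k. F k - skconst r' k) = skmult \<sigma> \<delta> G (skXminus c)"
    then obtain G M where "G \<in> skpolys_lt M" and Geq: "(\<lambda>k. F k - skconst r' k) = skmult \<sigma> \<delta> G (skXminus c)"
      by (auto elim: skpolys_obtain_lt)
    have FN': "F \<in> skpolys_lt (N + 1)" and C': "skconst r' \<in> skpolys_lt (N + 1)"
      using skpolys_lt_mono[OF FN, of "N + 1"] skpolys_lt_mono[OF skconst_lt, of "N + 1"] by simp_all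
    have "0 = Dapply \<sigma> \<delta> (\<lambda>k. 1 * F k + (-1) * skconst r' k) c 1"
      using vanish[OF \<open>G \<in> skpolys_lt M\<close>] Geq by simp
    also have "\<dots> = Dapply \<sigma> \<delta> F c 1 - r'"
      by (simp only: Dapply_linear[OF FN' C'] Dapply_lt1[OF skconst_lt]) (simp add: skconst_def)
    finally show "r' = Dapply \<sigma> \<delta> F c 1" by simp
  qed
qed

definition skconj :: "'a \<Rightarrow> 'a \<Rightarrow> 'a" where
  "skconj a b = D a b * inverse b"

lemma D_mult_nonzero:
  assumes "b \<noteq> 0"
  shows "D a (w * b) = D (skconj a b) w * b"
proof -
  have "D a (w * b) = (\<sigma> w * (D a b * inverse b) + \<delta> w) * b"
    using assms by (simp add: D_mult distrib_right mult.assoc)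
  then show ?thesis by (simp add: Dop_def skconj_def)
qed

lemma D_power_skconj_one: "b \<noteq> 0 \<Longrightarrow> (D (skconj a b) ^^ i) 1 = (D a ^^ i) b * inverse b"
proof (induction i)
  case (Suc i)
  have "D a ((D a ^^ i) b) = D a (((D a ^^ i) b * inverse b) * b)"
    using Suc.prems by (simp add: mult.assoc)
  also have "\<dots> = D (skconj a b) ((D a ^^ i) b * inverse b) * b"
    by (rule D_mult_nonzero[OF Suc.prems])
  finally show ?case using Suc by (simp add: mult.assoc)
qed simp

lemma Dapply_skconj_one:
  "b \<noteq> 0 \<Longrightarrow> Dapply \<sigma> \<delta> F (skconj a b) 1 = Dapply \<sigma> \<delta> F a b * inverse b"
  by (simp add: Dapply_def D_power_skconj_one sum_distrib_right mult.assoc)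

lemma Dapply_eq_skconj: "b \<noteq> 0 \<Longrightarrow> Dapply \<sigma> \<delta> F a b = Dapply \<sigma> \<delta> F (skconj a b) 1 * b"
  by (simp add: Dapply_skconj_one mult.assoc)

lemma Cls_iff: "x \<in> Cls \<sigma> \<delta> a \<longleftrightarrow> (\<exists>b. b \<noteq> 0 \<and> x = skconj a b)"
  by (auto simp: Cls_def skconj_def)

lemma skconj_in_Cls: "b \<noteq> 0 \<Longrightarrow> skconj a b \<in> Cls \<sigma> \<delta> a"
  by (auto simp: Cls_iff)

lemma Cls_refl: "a \<in> Cls \<sigma> \<delta> a"
  using skconj_in_Cls[of 1 a] by (simp add: skconj_def)

lemma Cls_trans:
  assumes "x \<in> Cls \<sigma> \<delta> y" "z \<in> Cls \<sigma> \<delta> x"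
  shows "z \<in> Cls \<sigma> \<delta> y"
proof -
  obtain b g where b: "b \<noteq> 0" "x = skconj y b" and g: "g \<noteq> 0" "z = skconj x g"
    using assms by (auto simp: Cls_iff)
  have "skconj y (g * b) = D x g * b * (inverse b * inverse g)"
    using b g D_mult_nonzero[OF b(1), of y g]
    by (simp add: skconj_def nonzero_inverse_mult_distrib)
  also have "\<dots> = z"
    using b g by (simp add: skconj_def) (metis mult.assoc right_inverse mult_1_left)
  finally show ?thesis
    unfolding Cls_iff using b g by (intro exI[of _ "g * b"]) simp
qed

lemma Cls_sym:
  assumes "x \<in> Cls \<sigma> \<delta> y"
  shows "y \<in> Cls \<sigma> \<delta> x"
proof -
  obtain b where b: "b \<noteq> 0" "x = skconj y b"
    using assms by (auto simp: Cls_iff)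
  have "D y (inverse b * b) = D x (inverse b) * b"
    using D_mult_nonzero[OF b(1)] b(2) by simp
  then have "D x (inverse b) = y * inverse b"
    using b(1) by (metis D_one mult.assoc left_inverse right_inverse mult_1_right)
  then have "skconj x (inverse b) = y"
    using b(1) by (simp add: skconj_def mult.assoc)
  then show ?thesis
    unfolding Cls_iff by (intro exI[of _ "inverse b"]) (simp add: b)
qed

lemma Cls_eq: "x \<in> Cls \<sigma> \<delta> y \<Longrightarrow> Cls \<sigma> \<delta> x = Cls \<sigma> \<delta> y"
  by (meson Cls_sym Cls_trans subset_antisym subsetI)

lemma Cls_disjoint: "Cls \<sigma> \<delta> x \<noteq> Cls \<sigma> \<delta> y \<Longrightarrow> Cls \<sigma> \<delta> x \<inter> Cls \<sigma> \<delta> y = {}"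
  using Cls_eq by blast

lemma P_closure_iff: "b \<in> P_closure \<sigma> \<delta> S \<longleftrightarrow>
   (\<forall>F\<in>skpolys. (\<forall>c\<in>S. Dapply \<sigma> \<delta> F c 1 = 0) \<longrightarrow> Dapply \<sigma> \<delta> F b 1 = 0)"
  by (simp add: P_closure_def skeval_eq_Dapply)

lemma P_closure_mono: "S \<subseteq> T \<Longrightarrow> P_closure \<sigma> \<delta> S \<subseteq> P_closure \<sigma> \<delta> T"
  by (auto simp: P_closure_def)

lemma P_independent_subset: "P_independent \<sigma> \<delta> S \<Longrightarrow> T \<subseteq> S \<Longrightarrow> P_independent \<sigma> \<delta> T"
  unfolding P_independent_def using P_closure_mono[of "T - {_}" "S - {_}"] by blast

lemma monic_annihilator_exists:
  assumes "finite S"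
  shows "\<exists>P. P \<in> skpolys_lt (Suc (card S)) \<and> P (card S) = 1 \<and> (\<forall>c\<in>S. Dapply \<sigma> \<delta> P c 1 = 0) \<and>
           (\<forall>c. Dapply \<sigma> \<delta> P c 1 = 0 \<longrightarrow> (\<exists>s\<in>S. c \<in> Cls \<sigma> \<delta> s))"
  using assms
proof (induction S rule: finite_induct)
  case empty
  have "skconst 1 \<in> skpolys_lt (Suc (card {}))" "skconst 1 (card {}) = 1"
    using skconst_lt by (simp_all add: skconst_def)
  then show ?case
    by (intro exI[of _ "skconst 1"]) (simp add: Dapply_skconst_one)
next
  case (insert b S)
  then obtain P where P: "P \<in> skpolys_lt (Suc (card S))" "P (card S) = 1"
    "\<forall>c\<in>S. Dapply \<sigma> \<delta> P c 1 = 0" "\<forall>c. Dapply \<sigma> \<delta> P c 1 = 0 \<longrightarrow> (\<exists>s\<in>S. c \<in> Cls \<sigma> \<delta> s)"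
    by blast
  \<comment> \<open>the new annihilator is \<open>(x - b') P\<close>, where \<open>b'\<close> is \<open>b\<close> conjugated by \<open>P(b)\<close>\<close>
  define r where "r = Dapply \<sigma> \<delta> P b 1"
  define b' where "b' = (if r = 0 then b else skconj b r)"
  define P' where "P' = skmult \<sigma> \<delta> (skXminus b') P"
  have ev: "Dapply \<sigma> \<delta> P' c 1 = D c (Dapply \<sigma> \<delta> P c 1) - b' * Dapply \<sigma> \<delta> P c 1" for c
    unfolding P'_def by (simp add: Dapply_skmult[OF skXminus_lt P(1)] Dapply_skXminus)
  have P2: "P \<in> skpolys_lt (Suc (Suc (card S)))"
    by (rule skpolys_lt_mono[OF P(1)]) simp
  have lt: "P' \<in> skpolys_lt (Suc (card (insert b S)))"
    using skxmul_lt[OF P(1)] P2 insert(1,2) by (simp add: P'_def skmult_skXminus skpolys_lt_def)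
  have lead: "P' (card (insert b S)) = 1"
    using insert(1,2) P(1,2) skxmul_lead[OF P(1)] by (simp add: P'_def skmult_skXminus skpolys_lt_def)
  have "Dapply \<sigma> \<delta> P' b 1 = 0"
    by (cases "r = 0") (simp_all add: ev r_def[symmetric] b'_def skconj_def mult.assoc)
  then have vanish: "\<forall>c\<in>insert b S. Dapply \<sigma> \<delta> P' c 1 = 0"
    using P(3) by (simp add: ev)
  have roots: "\<exists>s\<in>insert b S. c \<in> Cls \<sigma> \<delta> s" if c0: "Dapply \<sigma> \<delta> P' c 1 = 0" for c
  proof (cases "Dapply \<sigma> \<delta> P c 1 = 0")
    case True
    then show ?thesis using P(4) by auto
  next
    case False
    have "b' = skconj c (Dapply \<sigma> \<delta> P c 1)"
      using c0 False by (simp add: ev skconj_def mult.assoc)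
    then have "c \<in> Cls \<sigma> \<delta> b'"
      using False by (simp add: Cls_sym skconj_in_Cls)
    moreover have "b' \<in> Cls \<sigma> \<delta> b"
      by (simp add: b'_def Cls_refl skconj_in_Cls)
    ultimately show ?thesis
      using Cls_trans by blast
  qed
  show ?case using lt lead vanish roots by blast
qed

lemma monic_annihilator_divides:
  assumes low: "\<forall>F \<in> skpolys_lt (card S). (\<forall>c\<in>S. Dapply \<sigma> \<delta> F c 1 = 0) \<longrightarrow> F = (\<lambda>_. 0)"
    and P: "P \<in> skpolys_lt (Suc (card S))" "P (card S) = 1" "\<forall>c\<in>S. Dapply \<sigma> \<delta> P c 1 = 0"
    and H: "H \<in> skpolys_lt N" "\<forall>c\<in>S. Dapply \<sigma> \<delta> H c 1 = 0"
  shows "\<exists>Q. Q \<in> skpolys_lt (N - card S) \<and> H = skmult \<sigma> \<delta> Q P"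
proof -
  obtain Q R where Q: "Q \<in> skpolys_lt (N - card S)" and R: "R \<in> skpolys_lt (card S)"
    and eq: "H = (\<lambda>k. skmult \<sigma> \<delta> Q P k + R k)"
    using skpoly_division[OF P(1,2) H(1)] by blast
  define L where "L = Suc (card S) + (N - card S) + card S"
  have QP: "skmult \<sigma> \<delta> Q P \<in> skpolys_lt L"
    unfolding L_def by (rule skpolys_lt_mono[OF skmult_in_skpolys_lt[OF Q P(1)]]) simp
  have R': "R \<in> skpolys_lt L"
    unfolding L_def by (rule skpolys_lt_mono[OF R]) simp
  have "Dapply \<sigma> \<delta> R c 1 = 0" if c: "c \<in> S" for c
  proof -
    have "0 = Dapply \<sigma> \<delta> (\<lambda>k. 1 * skmult \<sigma> \<delta> Q P k + 1 * R k) c 1"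
      using H(2) c eq by simp
    also have "\<dots> = Dapply \<sigma> \<delta> R c 1"
      by (simp only: Dapply_linear[OF QP R'] Dapply_skmult[OF Q P(1)]) (simp add: P(3) c)
    finally show ?thesis by simp
  qed
  then have "R = (\<lambda>_. 0)" using low R by blast
  then show ?thesis using Q eq by auto
qed

lemma monic_annihilator_nonzero:
  assumes low: "\<forall>F \<in> skpolys_lt (card S). (\<forall>c\<in>S. Dapply \<sigma> \<delta> F c 1 = 0) \<longrightarrow> F = (\<lambda>_. 0)"
    and P: "P \<in> skpolys_lt (Suc (card S))" "P (card S) = 1" "\<forall>c\<in>S. Dapply \<sigma> \<delta> P c 1 = 0"
    and b: "b \<notin> P_closure \<sigma> \<delta> S"
  shows "Dapply \<sigma> \<delta> P b 1 \<noteq> 0"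
proof
  assume Pb: "Dapply \<sigma> \<delta> P b 1 = 0"
  from b obtain H where H: "H \<in> skpolys" "\<forall>c\<in>S. Dapply \<sigma> \<delta> H c 1 = 0" "Dapply \<sigma> \<delta> H b 1 \<noteq> 0"
    by (auto simp: P_closure_iff)
  obtain N where HN: "H \<in> skpolys_lt N" using H(1) by (rule skpolys_obtain_lt)
  obtain Q where Q: "Q \<in> skpolys_lt (N - card S)" "H = skmult \<sigma> \<delta> Q P"
    using monic_annihilator_divides[OF low P HN H(2)] by blast
  have "Dapply \<sigma> \<delta> H b 1 = 0"
    using Q by (simp add: Dapply_skmult[OF Q(1) P(1)] Pb)
  with H(3) show False by simp
qed

lemma P_independent_low_degree_zero:
  assumes "finite S" "P_independent \<sigma> \<delta> S"
  shows "\<forall>F \<in> skpolys_lt (card S). (\<forall>c\<in>S. Dapply \<sigma> \<delta> F c 1 = 0) \<longrightarrow> F = (\<lambda>_. 0)"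
  using assms
proof (induction S rule: finite_induct)
  case empty
  then show ?case by (auto simp: skpolys_lt_def)
next
  case (insert b S)
  have IH: "\<forall>F \<in> skpolys_lt (card S). (\<forall>c\<in>S. Dapply \<sigma> \<delta> F c 1 = 0) \<longrightarrow> F = (\<lambda>_. 0)"
    using insert P_independent_subset by blast
  have bS: "b \<notin> P_closure \<sigma> \<delta> S"
    using insert(2,4) unfolding P_independent_def by (metis Diff_insert_absorb insertI1)
  obtain P where P: "P \<in> skpolys_lt (Suc (card S))" "P (card S) = 1" "\<forall>c\<in>S. Dapply \<sigma> \<delta> P c 1 = 0"
    using monic_annihilator_exists[OF insert(1)] by blast
  have Pb: "Dapply \<sigma> \<delta> P b 1 \<noteq> 0"
    by (rule monic_annihilator_nonzero[OF IH P bS])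
  show ?case
  proof (intro ballI impI)
    fix F assume F: "F \<in> skpolys_lt (card (insert b S))" and v: "\<forall>c\<in>insert b S. Dapply \<sigma> \<delta> F c 1 = 0"
    \<comment> \<open>\<open>F = q P\<close> with a constant \<open>q\<close>, and \<open>0 = F(b) = q P(b)\<close> forces \<open>q = 0\<close>\<close>
    have "F \<in> skpolys_lt (Suc (card S))"
      using F insert(1,2) by simp
    then obtain Q where Q: "Q \<in> skpolys_lt 1" "F = skmult \<sigma> \<delta> Q P"
      using monic_annihilator_divides[OF IH P] v by fastforce
    have "Q 0 * Dapply \<sigma> \<delta> P b 1 = Dapply \<sigma> \<delta> F b 1"
      by (simp add: Q(2) Dapply_skmult[OF Q(1) P(1)] Dapply_lt1[OF Q(1)])
    also have "\<dots> = 0"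
      using v by simp
    finally have "Q 0 * Dapply \<sigma> \<delta> P b 1 = 0" .
    then have "Q 0 = 0"
      using Pb by simp
    then have "Q = (\<lambda>_. 0)"
      using Q(1) by (auto simp: skpolys_lt_def fun_eq_iff) (metis Suc_leI not_gr0)
    then show "F = (\<lambda>_. 0)"
      using Q(2) by (simp add: skmult_zero_left)
  qed
qed

lemma P_independent_card_le:
  assumes S: "finite S" "P_independent \<sigma> \<delta> S" and T: "finite T"
    and sub: "S \<subseteq> P_closure \<sigma> \<delta> T"
  shows "card S \<le> card T"
proof (rule ccontr)
  assume "\<not> card S \<le> card T"
  obtain P where P: "P \<in> skpolys_lt (Suc (card T))" "P (card T) = 1" "\<forall>c\<in>T. Dapply \<sigma> \<delta> P c 1 = 0"
    using monic_annihilator_exists[OF T] by blast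
  have "\<forall>c\<in>S. Dapply \<sigma> \<delta> P c 1 = 0"
    using sub P(3) skpolys_lt_imp_skpolys[OF P(1)] by (auto simp: P_closure_iff)
  moreover have "P \<in> skpolys_lt (card S)"
    by (rule skpolys_lt_mono[OF P(1)]) (use \<open>\<not> card S \<le> card T\<close> in simp)
  ultimately have "P = (\<lambda>_. 0)"
    using P_independent_low_degree_zero[OF S] by blast
  with P(2) show False by simp
qed

lemma Eval_on_in_funspace: "Eval_on \<sigma> \<delta> S F \<in> funspace S"
  by (simp add: Eval_on_def funspace_def)

lemma Eval_on_eq_Dapply: "F \<in> skpolys_lt N \<Longrightarrow> b \<in> S \<Longrightarrow> Eval_on \<sigma> \<delta> S F b = Dapply \<sigma> \<delta> F b 1"
  by (simp add: Eval_on_def skeval_eq_Dapply skpolys_lt_imp_skpolys)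

lemma Eval_on_linear:
  assumes "F \<in> skpolys_lt N" "G \<in> skpolys_lt N"
  shows "Eval_on \<sigma> \<delta> S (\<lambda>k. u * F k + v * G k) = (\<lambda>x. u * Eval_on \<sigma> \<delta> S F x + v * Eval_on \<sigma> \<delta> S G x)"
proof
  fix x
  have "(\<lambda>k. u * F k + v * G k) \<in> skpolys_lt N"
    using assms by (simp add: skpolys_lt_def)
  then show "Eval_on \<sigma> \<delta> S (\<lambda>k. u * F k + v * G k) x = u * Eval_on \<sigma> \<delta> S F x + v * Eval_on \<sigma> \<delta> S G x"
    using assms by (cases "x \<in> S") (simp_all add: Eval_on_eq_Dapply Dapply_linear, simp add: Eval_on_def)
qed

lemma interpolation_exists:
  assumes S: "finite S" "P_independent \<sigma> \<delta> S" and f: "f \<in> funspace S"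
  shows "\<exists>F \<in> skpolys_lt (card S). Eval_on \<sigma> \<delta> S F = f"
proof -
  \<comment> \<open>a Lagrange basis: for each \<open>b \<in> S\<close> the annihilator of \<open>S - {b}\<close>, which does not vanish at \<open>b\<close>\<close>
  have "\<exists>P. P \<in> skpolys_lt (card S) \<and> Dapply \<sigma> \<delta> P b 1 \<noteq> 0 \<and> (\<forall>c\<in>S - {b}. Dapply \<sigma> \<delta> P c 1 = 0)"
    if b: "b \<in> S" for b
  proof -
    have T: "finite (S - {b})" "P_independent \<sigma> \<delta> (S - {b})"
      using S P_independent_subset by auto
    have bT: "b \<notin> P_closure \<sigma> \<delta> (S - {b})"
      using S(2) b by (simp add: P_independent_def)
    obtain P where P: "P \<in> skpolys_lt (Suc (card (S - {b})))" "P (card (S - {b})) = 1"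
      "\<forall>c\<in>S - {b}. Dapply \<sigma> \<delta> P c 1 = 0"
      using monic_annihilator_exists[OF T(1)] by blast
    have "Dapply \<sigma> \<delta> P b 1 \<noteq> 0"
      by (rule monic_annihilator_nonzero[OF P_independent_low_degree_zero[OF T] P bT])
    moreover have "Suc (card (S - {b})) = card S"
      using b S(1) by (metis card_Suc_Diff1)
    ultimately show ?thesis
      using P by metis
  qed
  then obtain L where L: "\<And>b. b \<in> S \<Longrightarrow> L b \<in> skpolys_lt (card S)"
    "\<And>b. b \<in> S \<Longrightarrow> Dapply \<sigma> \<delta> (L b) b 1 \<noteq> 0"
    "\<And>b c. b \<in> S \<Longrightarrow> c \<in> S - {b} \<Longrightarrow> Dapply \<sigma> \<delta> (L b) c 1 = 0"
    by metis
  define F where "F = (\<lambda>k. \<Sum>b\<in>S. (f b * inverse (Dapply \<sigma> \<delta> (L b) b 1)) * L b k)"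
  have Flt: "F \<in> skpolys_lt (card S)"
    using L(1) by (simp add: F_def skpolys_lt_def)
  have "Eval_on \<sigma> \<delta> S F c = f c" for c
  proof (cases "c \<in> S")
    case False
    then show ?thesis using f by (simp add: Eval_on_def funspace_def)
  next
    case True
    have "Eval_on \<sigma> \<delta> S F c
        = (\<Sum>b\<in>S. (f b * inverse (Dapply \<sigma> \<delta> (L b) b 1)) * Dapply \<sigma> \<delta> (L b) c 1)"
      unfolding Eval_on_eq_Dapply[OF Flt True] unfolding F_def by (rule Dapply_sum[OF S(1) L(1)])
    also have "\<dots> = (f c * inverse (Dapply \<sigma> \<delta> (L c) c 1)) * Dapply \<sigma> \<delta> (L c) c 1"
    proof -
      have "(\<Sum>b\<in>S - {c}. (f b * inverse (Dapply \<sigma> \<delta> (L b) b 1)) * Dapply \<sigma> \<delta> (L b) c 1) = 0"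
        by (rule sum.neutral) (use True L(3) in auto)
      then show ?thesis by (simp add: sum.remove[OF S(1) True])
    qed
    also have "\<dots> = f c"
      using L(2)[OF True] by (simp add: mult.assoc)
    finally show ?thesis .
  qed
  then show ?thesis
    using Flt by blast
qed

lemma interpolation_unique:
  assumes S: "finite S" "P_independent \<sigma> \<delta> S"
    and F: "F \<in> skpolys_lt (card S)" and G: "G \<in> skpolys_lt (card S)"
    and eq: "Eval_on \<sigma> \<delta> S F = Eval_on \<sigma> \<delta> S G"
  shows "F = G"
proof -
  have "Dapply \<sigma> \<delta> (\<lambda>k. 1 * F k + (-1) * G k) c 1 = 0" if c: "c \<in> S" for c
    using fun_cong[OF eq, of c] c
    by (simp only: Dapply_linear[OF F G] Eval_on_eq_Dapply[OF F c] Eval_on_eq_Dapply[OF G c]) simp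
  moreover have "(\<lambda>k. 1 * F k + (-1) * G k) \<in> skpolys_lt (card S)"
    using F G by (simp add: skpolys_lt_def)
  ultimately have "(\<lambda>k. 1 * F k + (-1) * G k) = (\<lambda>_. 0)"
    using P_independent_low_degree_zero[OF S] by blast
  then show ?thesis
    by (simp add: fun_eq_iff)
qed

lemma interp_eqI:
  assumes S: "finite S" "P_independent \<sigma> \<delta> S" "card S = n"
    and G: "G \<in> skpolys_lt n" "Eval_on \<sigma> \<delta> S G = f"
  shows "interp \<sigma> \<delta> S n f = G"
  unfolding interp_def by (rule the_equality) (use G interpolation_unique[OF S(1,2)] S(3) in auto)

lemma interp_spec:
  assumes S: "finite S" "P_independent \<sigma> \<delta> S" "card S = n" and f: "f \<in> funspace S"
  shows "interp \<sigma> \<delta> S n f \<in> skpolys_lt n" "Eval_on \<sigma> \<delta> S (interp \<sigma> \<delta> S n f) = f"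
proof -
  obtain F where F: "F \<in> skpolys_lt n" "Eval_on \<sigma> \<delta> S F = f"
    using interpolation_exists[OF S(1,2) f] S(3) by blast
  then show "interp \<sigma> \<delta> S n f \<in> skpolys_lt n" "Eval_on \<sigma> \<delta> S (interp \<sigma> \<delta> S n f) = f"
    using interp_eqI[OF S F] by simp_all
qed

lemma interp_add:
  assumes S: "finite S" "P_independent \<sigma> \<delta> S" "card S = n" and f: "f \<in> funspace S" "g \<in> funspace S"
  shows "interp \<sigma> \<delta> S n (\<lambda>x. f x + g x) = (\<lambda>k. interp \<sigma> \<delta> S n f k + interp \<sigma> \<delta> S n g k)"
  using interp_spec[OF S f(1)] interp_spec[OF S f(2)]
    Eval_on_linear[of "interp \<sigma> \<delta> S n f" n "interp \<sigma> \<delta> S n g" S 1 1]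
  by (intro interp_eqI[OF S]) (simp_all add: skpolys_lt_def)

lemma interp_scale:
  assumes S: "finite S" "P_independent \<sigma> \<delta> S" "card S = n" and f: "f \<in> funspace S"
  shows "interp \<sigma> \<delta> S n (\<lambda>x. c * f x) = (\<lambda>k. c * interp \<sigma> \<delta> S n f k)"
  using interp_spec[OF S f] Eval_on_linear[of "interp \<sigma> \<delta> S n f" n "interp \<sigma> \<delta> S n f" S c 0]
  by (intro interp_eqI[OF S]) (simp_all add: skpolys_lt_def)

lemma annihilator_of_family:
  fixes m :: nat
  shows "\<exists>Q\<in>skpolys. (\<forall>j<m. Dapply \<sigma> \<delta> Q a (g j) = 0) \<and>
     (\<forall>y. Dapply \<sigma> \<delta> Q a y = 0 \<longrightarrow> (\<exists>k. (\<forall>j<m. k j \<in> Kset \<sigma> \<delta> a) \<and> y = (\<Sum>j<m. g j * k j)))"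
proof (induction m)
  case 0
  show ?case
    using skpolys_lt_imp_skpolys[OF skconst_lt] by (intro bexI[of _ "skconst 1"]) (simp_all add: Dapply_skconst_one)
next
  case (Suc m)
  then obtain Q where Q: "Q \<in> skpolys" "\<forall>j<m. Dapply \<sigma> \<delta> Q a (g j) = 0"
    "\<forall>y. Dapply \<sigma> \<delta> Q a y = 0 \<longrightarrow> (\<exists>k. (\<forall>j<m. k j \<in> Kset \<sigma> \<delta> a) \<and> y = (\<Sum>j<m. g j * k j))"
    by blast
  obtain N where QN: "Q \<in> skpolys_lt N" using Q(1) by (rule skpolys_obtain_lt)
  define \<gamma> where "\<gamma> = Dapply \<sigma> \<delta> Q a (g m)"
  show ?case
  proof (cases "\<gamma> = 0")
    case True
    show ?thesis
    proof (rule bexI[OF _ Q(1)], intro conjI allI impI)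
      fix j assume "j < Suc m"
      then show "Dapply \<sigma> \<delta> Q a (g j) = 0"
        using Q(2) True \<gamma>_def less_Suc_eq by auto
    next
      fix y assume "Dapply \<sigma> \<delta> Q a y = 0"
      then obtain k where k: "\<forall>j<m. k j \<in> Kset \<sigma> \<delta> a" "y = (\<Sum>j<m. g j * k j)"
        using Q(3) by blast
      show "\<exists>k. (\<forall>j<Suc m. k j \<in> Kset \<sigma> \<delta> a) \<and> y = (\<Sum>j<Suc m. g j * k j)"
        by (rule exI[of _ "k(m := 0)"]) (use k in \<open>auto simp: less_Suc_eq\<close>)
    qed
  next
    case False
    \<comment> \<open>\<open>Q' = (x - b') Q\<close> kills \<open>g m\<close>; its kernel is \<open>Q\<^sup>\<D>\<^sup>\<^sub>a\<close>-preimage of \<open>\<gamma> K\<^sub>a\<close>\<close>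
    define b' where "b' = D a \<gamma> * inverse \<gamma>"
    define Q' where "Q' = skmult \<sigma> \<delta> (skXminus b') Q"
    have Q'p: "Q' \<in> skpolys"
      unfolding Q'_def by (rule skmult_skpolys[OF skXminus_lt QN])
    have ev: "Dapply \<sigma> \<delta> Q' a y = D a (Dapply \<sigma> \<delta> Q a y) - b' * Dapply \<sigma> \<delta> Q a y" for y
      unfolding Q'_def by (simp add: Dapply_skmult[OF skXminus_lt QN] Dapply_skXminus)
    show ?thesis
    proof (rule bexI[OF _ Q'p], intro conjI allI impI)
      fix j assume "j < Suc m"
      then show "Dapply \<sigma> \<delta> Q' a (g j) = 0"
        using Q(2) False by (cases "j = m") (simp_all add: ev \<gamma>_def[symmetric] b'_def mult.assoc)
    next
      fix y assume y0: "Dapply \<sigma> \<delta> Q' a y = 0"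
      define z where "z = Dapply \<sigma> \<delta> Q a y"
      define k0 where "k0 = inverse \<gamma> * z"
      have zk: "z = \<gamma> * k0"
        using False by (simp add: k0_def mult.assoc[symmetric])
      have "\<sigma> \<gamma> * D a k0 + \<delta> \<gamma> * k0 = D a (\<gamma> * k0)"
        by (simp add: D_mult)
      also have "\<dots> = b' * (\<gamma> * k0)"
        using y0 zk by (simp add: ev z_def)
      also have "\<dots> = D a \<gamma> * k0"
        using False by (simp add: b'_def mult.assoc[symmetric]) (simp add: mult.assoc)
      also have "\<dots> = \<sigma> \<gamma> * (a * k0) + \<delta> \<gamma> * k0"
        by (simp add: Dop_def algebra_simps)
      finally have "D a k0 = a * k0"
        using sigma_nonzero[OF False] by simp
      then have k0K: "k0 \<in> Kset \<sigma> \<delta> a"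
        by (simp add: Kset_iff)
      have "Dapply \<sigma> \<delta> Q a (y - g m * k0) = 0"
        by (simp add: Dapply_point_diff Dapply_point_mult_Kset[OF k0K] z_def[symmetric] \<gamma>_def[symmetric] zk)
      then obtain k where k: "\<forall>j<m. k j \<in> Kset \<sigma> \<delta> a" "y - g m * k0 = (\<Sum>j<m. g j * k j)"
        using Q(3) by blast
      have "(\<Sum>j<m. g j * (k(m := k0)) j) = (\<Sum>j<m. g j * k j)"
        by (rule sum.cong) auto
      then show "\<exists>k. (\<forall>j<Suc m. k j \<in> Kset \<sigma> \<delta> a) \<and> y = (\<Sum>j<Suc m. g j * k j)"
        using k k0K by (intro exI[of _ "k(m := k0)"]) (auto simp: less_Suc_eq algebra_simps)
    qed
  qed
qed

lemma closure_point_in_right_span: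
  fixes m :: nat
  assumes W: "finite W"
    and en: "bij_betw (\<lambda>j. skconj c (\<alpha> j)) {..<m} (W \<inter> Cls \<sigma> \<delta> c)" "\<forall>j<m. \<alpha> j \<noteq> 0"
    and \<beta>: "\<beta> \<noteq> 0" "skconj c \<beta> \<in> P_closure \<sigma> \<delta> W"
  shows "\<exists>k. (\<forall>j<m. k j \<in> Kset \<sigma> \<delta> c) \<and> \<beta> = (\<Sum>j<m. \<alpha> j * k j)"
proof -
  \<comment> \<open>\<open>P\<close> annihilates the part of \<open>W\<close> outside \<open>C(c)\<close> and has no root in \<open>C(c)\<close>, so \<open>P\<^sup>\<D>\<^sup>\<^sub>c\<close> is injective;
     \<open>Q\<close> then annihilates the images \<open>P\<^sup>\<D>\<^sup>\<^sub>c(\<alpha>\<^sub>j)\<close> with kernel their right \<open>K\<^sub>c\<close>-span\<close>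
  obtain P where P: "P \<in> skpolys_lt (Suc (card (W - Cls \<sigma> \<delta> c)))"
    "\<forall>x\<in>W - Cls \<sigma> \<delta> c. Dapply \<sigma> \<delta> P x 1 = 0"
    "\<forall>x. Dapply \<sigma> \<delta> P x 1 = 0 \<longrightarrow> (\<exists>s\<in>W - Cls \<sigma> \<delta> c. x \<in> Cls \<sigma> \<delta> s)"
    using monic_annihilator_exists[of "W - Cls \<sigma> \<delta> c"] W by auto
  have P_injective: "y = 0" if "Dapply \<sigma> \<delta> P c y = 0" for y
  proof (rule ccontr)
    assume y: "y \<noteq> 0"
    then have "Dapply \<sigma> \<delta> P (skconj c y) 1 = 0"
      using that by (simp add: Dapply_skconj_one)
    then obtain s where s: "s \<notin> Cls \<sigma> \<delta> c" "skconj c y \<in> Cls \<sigma> \<delta> s"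
      using P(3) by blast
    have "s \<in> Cls \<sigma> \<delta> c"
      using Cls_trans[OF skconj_in_Cls[OF y] Cls_sym[OF s(2)]] .
    with s(1) show False ..
  qed
  obtain Q where Q: "Q \<in> skpolys" "\<forall>j<m. Dapply \<sigma> \<delta> Q c (Dapply \<sigma> \<delta> P c (\<alpha> j)) = 0"
    "\<forall>y. Dapply \<sigma> \<delta> Q c y = 0 \<longrightarrow>
       (\<exists>k. (\<forall>j<m. k j \<in> Kset \<sigma> \<delta> c) \<and> y = (\<Sum>j<m. Dapply \<sigma> \<delta> P c (\<alpha> j) * k j))"
    using annihilator_of_family[where m=m and a=c and g="\<lambda>j. Dapply \<sigma> \<delta> P c (\<alpha> j)"] by blast
  obtain NQ where QN: "Q \<in> skpolys_lt NQ" using Q(1) by (rule skpolys_obtain_lt)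
  define R where "R = skmult \<sigma> \<delta> Q P"
  have evR: "Dapply \<sigma> \<delta> R x y = Dapply \<sigma> \<delta> Q x (Dapply \<sigma> \<delta> P x y)" for x y
    unfolding R_def by (rule Dapply_skmult[OF QN P(1)])
  have vanish: "\<forall>x\<in>W. Dapply \<sigma> \<delta> R x 1 = 0"
  proof
    fix x assume x: "x \<in> W"
    show "Dapply \<sigma> \<delta> R x 1 = 0"
    proof (cases "x \<in> Cls \<sigma> \<delta> c")
      case True
      then have "x \<in> (\<lambda>j. skconj c (\<alpha> j)) ` {..<m}"
        using en(1) x by (simp add: bij_betw_def)
      then obtain j where j: "j < m" "x = skconj c (\<alpha> j)"
        by auto
      then have "Dapply \<sigma> \<delta> R x 1 = Dapply \<sigma> \<delta> R c (\<alpha> j) * inverse (\<alpha> j)"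
        using en(2) by (simp add: Dapply_skconj_one)
      also have "\<dots> = 0"
        using Q(2) j(1) by (simp add: evR)
      finally show ?thesis .
    next
      case False
      then show ?thesis using P(2) x by (simp add: evR)
    qed
  qed
  have "R \<in> skpolys"
    unfolding R_def by (rule skmult_skpolys[OF QN P(1)])
  then have "Dapply \<sigma> \<delta> R (skconj c \<beta>) 1 = 0"
    using \<beta>(2) vanish unfolding P_closure_iff by blast
  then have "Dapply \<sigma> \<delta> R c \<beta> = 0"
    using \<beta>(1) by (simp add: Dapply_skconj_one)
  then have "Dapply \<sigma> \<delta> Q c (Dapply \<sigma> \<delta> P c \<beta>) = 0"
    by (simp add: evR)
  then obtain k where k: "\<forall>j<m. k j \<in> Kset \<sigma> \<delta> c"
    "Dapply \<sigma> \<delta> P c \<beta> = (\<Sum>j<m. Dapply \<sigma> \<delta> P c (\<alpha> j) * k j)"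
    using Q(3) by blast
  then have "Dapply \<sigma> \<delta> P c (\<beta> - (\<Sum>j<m. \<alpha> j * k j)) = 0"
    by (simp add: Dapply_point_diff Dapply_point_right_comb)
  then have "\<beta> = (\<Sum>j<m. \<alpha> j * k j)"
    using P_injective[of "\<beta> - (\<Sum>j<m. \<alpha> j * k j)"] by simp
  then show ?thesis
    using k(1) by blast
qed

lemma right_span_in_closure:
  fixes m :: nat
  assumes en: "bij_betw (\<lambda>j. skconj c (\<alpha> j)) {..<m} Y" "\<forall>j<m. \<alpha> j \<noteq> 0"
    and k: "\<forall>j<m. k j \<in> Kset \<sigma> \<delta> c" and \<beta>: "\<beta> \<noteq> 0" "\<beta> = (\<Sum>j<m. \<alpha> j * k j)"
  shows "skconj c \<beta> \<in> P_closure \<sigma> \<delta> Y"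
  unfolding P_closure_iff
proof (intro ballI impI)
  fix F assume F: "\<forall>y\<in>Y. Dapply \<sigma> \<delta> F y 1 = 0"
  have "Dapply \<sigma> \<delta> F c (\<alpha> j) = 0" if j: "j < m" for j
    using F en j Dapply_eq_skconj[of "\<alpha> j" F c] by (auto simp: bij_betw_def)
  then show "Dapply \<sigma> \<delta> F (skconj c \<beta>) 1 = 0"
    using \<beta> k by (simp add: Dapply_skconj_one Dapply_point_right_comb)
qed

lemma P_independent_imp_right_independent:
  fixes m :: nat
  assumes ind: "P_independent \<sigma> \<delta> W"
    and en: "bij_betw (\<lambda>j. skconj c (\<alpha> j)) {..<m} Y" "\<forall>j<m. \<alpha> j \<noteq> 0" "Y \<subseteq> W"
    and k: "\<forall>j<m. k j \<in> Kset \<sigma> \<delta> c" and s: "(\<Sum>j<m. \<alpha> j * k j) = 0"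
  shows "\<forall>j<m. k j = 0"
proof (intro allI impI, rule ccontr)
  fix j0 assume j0: "j0 < m" "k j0 \<noteq> 0"
  \<comment> \<open>solving the relation for \<open>\<alpha>\<^sub>j\<^sub>0\<close> puts its conjugate into the P-closure of the others\<close>
  define c0 where "c0 = skconj c (\<alpha> j0)"
  have c0W: "c0 \<in> W"
    using en(1,3) j0(1) by (auto simp: bij_betw_def c0_def)
  have "c0 \<in> P_closure \<sigma> \<delta> (W - {c0})"
    unfolding P_closure_iff
  proof (intro ballI impI)
    fix F assume F: "\<forall>y\<in>W - {c0}. Dapply \<sigma> \<delta> F y 1 = 0"
    have others: "Dapply \<sigma> \<delta> F c (\<alpha> j) * k j = 0" if j: "j \<in> {..<m} - {j0}" for j
    proof -
      have "skconj c (\<alpha> j) \<noteq> c0" "skconj c (\<alpha> j) \<in> W"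
        using en(1,3) j j0(1) unfolding c0_def bij_betw_def inj_on_def by auto
      then show ?thesis
        using F en(2) j Dapply_eq_skconj[of "\<alpha> j" F c] by simp
    qed
    have "0 = (\<Sum>j<m. Dapply \<sigma> \<delta> F c (\<alpha> j) * k j)"
      using Dapply_point_right_comb[OF k, of F \<alpha>] s by simp
    also have "\<dots> = Dapply \<sigma> \<delta> F c (\<alpha> j0) * k j0"
      using j0(1) others by (simp add: sum.remove[of "{..<m}" j0] sum.neutral)
    finally have "Dapply \<sigma> \<delta> F c (\<alpha> j0) = 0"
      using j0(2) by simp
    then show "Dapply \<sigma> \<delta> F c0 1 = 0"
      using en(2) j0(1) by (simp add: c0_def Dapply_skconj_one)
  qed
  with ind c0W show False
    by (simp add: P_independent_def)
qed

lemma Cls_enumeration_exists: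
  assumes "finite Y" "Y \<subseteq> Cls \<sigma> \<delta> c"
  shows "\<exists>\<alpha>. bij_betw (\<lambda>j. skconj c (\<alpha> j)) {..<card Y} Y \<and> (\<forall>j<card Y. \<alpha> j \<noteq> 0)"
proof -
  obtain h where h: "bij_betw h {..<card Y} Y"
    using ex_bij_betw_nat_finite[OF assms(1)] by (auto simp: atLeast0LessThan)
  have "\<exists>b. b \<noteq> 0 \<and> h j = skconj c b" if "j < card Y" for j
  proof -
    have "h j \<in> Y"
      using h that by (auto simp: bij_betw_def)
    then show ?thesis
      using assms(2) Cls_iff by blast
  qed
  then obtain \<alpha> where \<alpha>: "\<And>j. j < card Y \<Longrightarrow> \<alpha> j \<noteq> 0 \<and> h j = skconj c (\<alpha> j)"
    by metis
  have "bij_betw (\<lambda>j. skconj c (\<alpha> j)) {..<card Y} Y"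
    by (rule bij_betw_cong[THEN iffD1, OF _ h]) (simp add: \<alpha>)
  then show ?thesis
    using \<alpha> by blast
qed

lemma P_closure_restrict_Cls:
  assumes "finite W" "b \<in> Cls \<sigma> \<delta> c" "b \<in> P_closure \<sigma> \<delta> W"
  shows "b \<in> P_closure \<sigma> \<delta> (W \<inter> Cls \<sigma> \<delta> c)"
proof -
  obtain \<alpha> where en: "bij_betw (\<lambda>j. skconj c (\<alpha> j)) {..<card (W \<inter> Cls \<sigma> \<delta> c)} (W \<inter> Cls \<sigma> \<delta> c)"
    "\<forall>j<card (W \<inter> Cls \<sigma> \<delta> c). \<alpha> j \<noteq> 0"
    using Cls_enumeration_exists[of "W \<inter> Cls \<sigma> \<delta> c" c] assms(1) by auto
  obtain \<beta> where \<beta>: "\<beta> \<noteq> 0" "b = skconj c \<beta>"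
    using assms(2) by (auto simp: Cls_iff)
  then obtain k where "\<forall>j<card (W \<inter> Cls \<sigma> \<delta> c). k j \<in> Kset \<sigma> \<delta> c"
    "\<beta> = (\<Sum>j<card (W \<inter> Cls \<sigma> \<delta> c). \<alpha> j * k j)"
    using closure_point_in_right_span[OF assms(1) en] assms(3) by blast
  then show ?thesis
    using right_span_in_closure[OF en] \<beta> by blast
qed

lemma P_basis_finite_card_eq:
  assumes A: "P_basis \<sigma> \<delta> \<Omega> A" "finite A" and B: "P_basis \<sigma> \<delta> \<Omega> B"
  shows "finite B \<and> card B = card A"
proof -
  have BA: "B \<subseteq> P_closure \<sigma> \<delta> A" and indB: "P_independent \<sigma> \<delta> B"
    using A(1) B by (auto simp: P_basis_def)
  have "finite B"
  proof (rule ccontr)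
    assume "infinite B"
    then obtain B' where B': "finite B'" "card B' = Suc (card A)" "B' \<subseteq> B"
      using infinite_arbitrarily_large by blast
    have "card B' \<le> card A"
      using P_independent_card_le[OF B'(1) P_independent_subset[OF indB B'(3)] A(2)] B'(3) BA by blast
    with B'(2) show False by simp
  qed
  moreover have "card B \<le> card A"
    using P_independent_card_le[OF \<open>finite B\<close> indB A(2) BA] .
  moreover have "card A \<le> card B"
    using P_independent_card_le[OF A(2) _ \<open>finite B\<close>] A(1) B by (auto simp: P_basis_def)
  ultimately show ?thesis by simp
qed

lemma Rk_eq_card:
  assumes "P_basis \<sigma> \<delta> \<Omega> A" "finite A"
  shows "Rk \<sigma> \<delta> \<Omega> = card A"
  unfolding Rk_def using someI[of "P_basis \<sigma> \<delta> \<Omega>", OF assms(1)] P_basis_finite_card_eq[OF assms] by blast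

lemma card_Int_Cls_le:
  assumes "finite A" "P_independent \<sigma> \<delta> A" "finite B" "A \<subseteq> P_closure \<sigma> \<delta> B"
  shows "card (A \<inter> Cls \<sigma> \<delta> c) \<le> card (B \<inter> Cls \<sigma> \<delta> c)"
proof (rule P_independent_card_le)
  show "A \<inter> Cls \<sigma> \<delta> c \<subseteq> P_closure \<sigma> \<delta> (B \<inter> Cls \<sigma> \<delta> c)"
    using assms(3,4) P_closure_restrict_Cls by blast
qed (use assms P_independent_subset in auto)

lemma card_Int_Cls_eq:
  assumes "finite A" "P_independent \<sigma> \<delta> A" "finite B" "P_independent \<sigma> \<delta> B"
    and "A \<subseteq> P_closure \<sigma> \<delta> B" "B \<subseteq> P_closure \<sigma> \<delta> A"
  shows "card (A \<inter> Cls \<sigma> \<delta> c) = card (B \<inter> Cls \<sigma> \<delta> c)"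
  using card_Int_Cls_le[of A B c] card_Int_Cls_le[of B A c] assms by simp

lemma card_eq_sum_Int_Cls:
  fixes l :: nat
  assumes "finite A" "A = (\<Union>i<l. A \<inter> Cls \<sigma> \<delta> (a i))"
    and dist: "\<forall>i<l. \<forall>j<l. i \<noteq> j \<longrightarrow> Cls \<sigma> \<delta> (a i) \<noteq> Cls \<sigma> \<delta> (a j)"
  shows "card A = (\<Sum>i<l. card (A \<inter> Cls \<sigma> \<delta> (a i)))"
proof -
  have "card (\<Union>i<l. A \<inter> Cls \<sigma> \<delta> (a i)) = (\<Sum>i<l. card (A \<inter> Cls \<sigma> \<delta> (a i)))"
    using assms(1) dist Cls_disjoint by (intro card_UN_disjoint) blast+
  with assms(2) show ?thesis by simp
qed

lemma transition_matrix_inverse: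
  fixes m :: nat
  assumes ind: "\<forall>k. (\<forall>j<m. k j \<in> Kset \<sigma> \<delta> c) \<longrightarrow> (\<Sum>j<m. \<alpha> j * k j) = 0 \<longrightarrow> (\<forall>j<m. k j = 0)"
    and M: "\<forall>j<m. \<forall>k<m. M j k \<in> Kset \<sigma> \<delta> c" and N: "\<forall>j<m. \<forall>k<m. N j k \<in> Kset \<sigma> \<delta> c"
    and \<beta>: "\<forall>k<m. \<beta> k = (\<Sum>j<m. \<alpha> j * M j k)" and \<alpha>: "\<forall>j<m. \<alpha> j = (\<Sum>k<m. \<beta> k * N k j)"
  shows "\<forall>j<m. \<forall>j'<m. (\<Sum>l<m. M j l * N l j') = (if j = j' then 1 else 0)"
proof (intro allI impI)
  fix j j' assume j: "j < m" and j': "j' < m"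
  \<comment> \<open>the \<open>j'\<close>-th column of \<open>MN - I\<close> is a right \<open>K\<^sub>c\<close>-relation among the \<open>\<alpha>\<^sub>j\<close>\<close>
  define e where "e j = (\<Sum>l<m. M j l * N l j') - (if j = j' then 1 else 0)" for j
  have eK: "\<forall>j<m. e j \<in> Kset \<sigma> \<delta> c"
    using M N j' by (auto simp: e_def intro!: Kset_diff Kset_sum Kset_mult)
  have "(\<Sum>j<m. \<alpha> j * (\<Sum>l<m. M j l * N l j')) = (\<Sum>j<m. \<Sum>l<m. \<alpha> j * M j l * N l j')"
    by (simp add: sum_distrib_left mult.assoc)
  also have "\<dots> = (\<Sum>l<m. (\<Sum>j<m. \<alpha> j * M j l) * N l j')"
    by (subst sum.swap) (simp add: sum_distrib_right)
  also have "\<dots> = (\<Sum>l<m. \<beta> l * N l j')"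
    using \<beta> by simp
  also have "\<dots> = \<alpha> j'"
    using \<alpha> j' by simp
  finally have MN: "(\<Sum>j<m. \<alpha> j * (\<Sum>l<m. M j l * N l j')) = \<alpha> j'" .
  have "(\<Sum>j<m. \<alpha> j * (if j = j' then 1 else 0)) = \<alpha> j'"
    using j' by (simp add: if_distrib[of "(*) _"] sum.delta' cong: if_cong)
  with MN have "(\<Sum>j<m. \<alpha> j * e j) = 0"
    by (simp add: e_def right_diff_distrib sum_subtractf del: mult_1_right)
  then have "\<forall>j<m. e j = 0"
    using ind eK by blast
  then show "(\<Sum>l<m. M j l * N l j') = (if j = j' then 1 else 0)"
    using j by (simp add: e_def)
qed

lemma transition_matrix_exists:
  fixes m :: nat
  assumes A: "finite A" "P_independent \<sigma> \<delta> A" and B: "finite B" "P_independent \<sigma> \<delta> B"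
    and AB: "A \<subseteq> P_closure \<sigma> \<delta> B" and BA: "B \<subseteq> P_closure \<sigma> \<delta> A"
    and enA: "bij_betw (\<lambda>j. skconj c (\<alpha> j)) {..<m} (A \<inter> Cls \<sigma> \<delta> c)" "\<forall>j<m. \<alpha> j \<noteq> 0"
    and enB: "bij_betw (\<lambda>j. skconj c (\<beta> j)) {..<m} (B \<inter> Cls \<sigma> \<delta> c)" "\<forall>j<m. \<beta> j \<noteq> 0"
  shows "\<exists>Mc. inv_matrix_in (Kset \<sigma> \<delta> c) m Mc \<and> (\<forall>k<m. \<beta> k = (\<Sum>j<m. \<alpha> j * Mc j k))"
proof -
  have "\<forall>k\<in>{..<m}. \<exists>col. (\<forall>j<m. col j \<in> Kset \<sigma> \<delta> c) \<and> \<beta> k = (\<Sum>j<m. \<alpha> j * col j)"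
  proof
    fix k assume k: "k \<in> {..<m}"
    have "skconj c (\<beta> k) \<in> P_closure \<sigma> \<delta> A"
      using bij_betw_apply[OF enB(1) k] BA by blast
    then show "\<exists>col. (\<forall>j<m. col j \<in> Kset \<sigma> \<delta> c) \<and> \<beta> k = (\<Sum>j<m. \<alpha> j * col j)"
      using closure_point_in_right_span[OF A(1) enA] enB(2) k by blast
  qed
  then obtain M where M: "\<forall>k\<in>{..<m}. (\<forall>j<m. M k j \<in> Kset \<sigma> \<delta> c) \<and> \<beta> k = (\<Sum>j<m. \<alpha> j * M k j)"
    by (rule bchoice[THEN exE])
  have "\<forall>k\<in>{..<m}. \<exists>col. (\<forall>j<m. col j \<in> Kset \<sigma> \<delta> c) \<and> \<alpha> k = (\<Sum>j<m. \<beta> j * col j)"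
  proof
    fix k assume k: "k \<in> {..<m}"
    have "skconj c (\<alpha> k) \<in> P_closure \<sigma> \<delta> B"
      using bij_betw_apply[OF enA(1) k] AB by blast
    then show "\<exists>col. (\<forall>j<m. col j \<in> Kset \<sigma> \<delta> c) \<and> \<alpha> k = (\<Sum>j<m. \<beta> j * col j)"
      using closure_point_in_right_span[OF B(1) enB] enA(2) k by blast
  qed
  then obtain N where N: "\<forall>k\<in>{..<m}. (\<forall>j<m. N k j \<in> Kset \<sigma> \<delta> c) \<and> \<alpha> k = (\<Sum>j<m. \<beta> j * N k j)"
    by (rule bchoice[THEN exE])
  have indA: "\<forall>k. (\<forall>j<m. k j \<in> Kset \<sigma> \<delta> c) \<longrightarrow> (\<Sum>j<m. \<alpha> j * k j) = 0 \<longrightarrow> (\<forall>j<m. k j = 0)"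
    using P_independent_imp_right_independent[OF A(2) enA] by blast
  have indB: "\<forall>k. (\<forall>j<m. k j \<in> Kset \<sigma> \<delta> c) \<longrightarrow> (\<Sum>j<m. \<beta> j * k j) = 0 \<longrightarrow> (\<forall>j<m. k j = 0)"
    using P_independent_imp_right_independent[OF B(2) enB] by blast
  define Mc where "Mc j k = M k j" for j k
  define Nc where "Nc j k = N k j" for j k
  have McK: "\<forall>j<m. \<forall>k<m. Mc j k \<in> Kset \<sigma> \<delta> c" and NcK: "\<forall>j<m. \<forall>k<m. Nc j k \<in> Kset \<sigma> \<delta> c"
    using M N by (simp_all add: Mc_def Nc_def)
  have \<beta>: "\<forall>k<m. \<beta> k = (\<Sum>j<m. \<alpha> j * Mc j k)" and \<alpha>: "\<forall>k<m. \<alpha> k = (\<Sum>j<m. \<beta> j * Nc j k)"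
    using M N by (simp_all add: Mc_def Nc_def)
  have "inv_matrix_in (Kset \<sigma> \<delta> c) m Mc"
    unfolding inv_matrix_in_def
    using McK NcK transition_matrix_inverse[OF indA McK NcK \<beta> \<alpha>]
      transition_matrix_inverse[OF indB NcK McK \<alpha> \<beta>]
    by blast
  with \<beta> show ?thesis
    by blast
qed

end

lemma funspace_add:
  fixes f g :: "'b \<Rightarrow> 'a::division_ring"
  shows "f \<in> funspace S \<Longrightarrow> g \<in> funspace S \<Longrightarrow> (\<lambda>x. f x + g x) \<in> funspace S"
  by (simp add: funspace_def)

lemma funspace_scale:
  fixes f :: "'b \<Rightarrow> 'a::division_ring"
  shows "f \<in> funspace S \<Longrightarrow> (\<lambda>x. c * f x) \<in> funspace S"
  by (simp add: funspace_def)

lemma left_iso_funspace_cong: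
  assumes "\<And>f. f \<in> funspace S \<Longrightarrow> h f = h' f"
  shows "left_iso (funspace S) W h \<longleftrightarrow> left_iso (funspace S) W h'"
proof -
  have "h (\<lambda>x. f x + g x) = h' (\<lambda>x. f x + g x)" if "f \<in> funspace S" "g \<in> funspace S" for f g
    using assms funspace_add that by blast
  moreover have "h (\<lambda>x. c * f x) = h' (\<lambda>x. c * f x)" if "f \<in> funspace S" for c f
    using assms funspace_scale that by blast
  ultimately show ?thesis
    unfolding left_iso_def using bij_betw_cong[of "funspace S" h h' W] assms by auto
qed

lemma reindex_scale_left_iso:
  fixes w :: "'i \<Rightarrow> 'a::division_ring"
  assumes e: "bij_betw e I S" and w: "\<forall>p\<in>I. w p \<noteq> 0"
  shows "left_iso (funspace S) (funspace I) (\<lambda>f p. if p \<in> I then f (e p) * w p else 0)"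
    (is "left_iso _ _ ?h")
proof -
  have inj: "inj_on ?h (funspace S)"
  proof (rule inj_onI)
    fix f g assume f: "f \<in> funspace S" and g: "g \<in> funspace S" and eq: "?h f = ?h g"
    show "f = g"
    proof
      fix x show "f x = g x"
      proof (cases "x \<in> S")
        case True
        define p where "p = inv_into I e x"
        have p: "p \<in> I" "e p = x"
          unfolding p_def using bij_betw_apply[OF bij_betw_inv_into[OF e] True] bij_betw_inv_into_right[OF e True]
          by simp_all
        then have "f x * w p = g x * w p"
          using fun_cong[OF eq, of p] by simp
        then show ?thesis
          using w p(1) by simp
      qed (use f g in \<open>simp add: funspace_def\<close>)
    qed
  qed
  have "c \<in> ?h ` funspace S" if c: "c \<in> funspace I" for c
  proof -
    define f where "f x = (if x \<in> S then c (inv_into I e x) * inverse (w (inv_into I e x)) else 0)" for x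
    have hf: "?h f p = c p" for p
    proof (cases "p \<in> I")
      case True
      then have "e p \<in> S" "inv_into I e (e p) = p"
        using bij_betw_apply[OF e] bij_betw_inv_into_left[OF e] by simp_all
      then show ?thesis
        using True w by (simp add: f_def mult.assoc)
    qed (use c in \<open>simp add: funspace_def\<close>)
    have "f \<in> funspace S"
      by (simp add: f_def funspace_def)
    then show ?thesis
      using hf by (intro image_eqI[where x=f]) (simp_all add: fun_eq_iff)
  qed
  moreover have "?h f \<in> funspace I" for f
    by (simp add: funspace_def)
  ultimately have "?h ` funspace S = funspace I"
    by blast
  with inj have "bij_betw ?h (funspace S) (funspace I)"
    by (simp add: bij_betw_def)
  then show ?thesis
    unfolding left_iso_def by (simp add: fun_eq_iff distrib_right mult.assoc)
qed

lemma piM_left_iso: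
  fixes M :: "nat \<Rightarrow> nat \<Rightarrow> nat \<Rightarrow> 'a::division_ring"
  assumes "\<forall>i<l. inv_matrix_in (K i) (nn i) (M i)"
  shows "left_iso (blockvecs l nn) (blockvecs l nn) (piM l nn M)"
proof -
  have "\<forall>i\<in>{..<l}. \<exists>Ni. (\<forall>j<nn i. \<forall>k<nn i. (\<Sum>t<nn i. M i j t * Ni t k) = (if j = k then 1 else 0)) \<and>
      (\<forall>j<nn i. \<forall>k<nn i. (\<Sum>t<nn i. Ni j t * M i t k) = (if j = k then 1 else 0))"
    using assms unfolding inv_matrix_in_def by blast
  then obtain N where N: "\<forall>i\<in>{..<l}.
      (\<forall>j<nn i. \<forall>k<nn i. (\<Sum>t<nn i. M i j t * N i t k) = (if j = k then 1 else 0)) \<and>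
      (\<forall>j<nn i. \<forall>k<nn i. (\<Sum>t<nn i. N i j t * M i t k) = (if j = k then 1 else 0))"
    by (rule bchoice[THEN exE])
  have into: "piM l nn X c \<in> blockvecs l nn" for X c
    by (auto simp: blockvecs_def piM_def)
  have inverse: "piM l nn Y (piM l nn X c) = c" if c: "c \<in> blockvecs l nn"
    and XY: "\<forall>i<l. \<forall>j<nn i. \<forall>k<nn i. (\<Sum>t<nn i. X i j t * Y i t k) = (if j = k then 1 else 0)" for X Y c
  proof (rule ext, clarify)
    fix i k
    show "piM l nn Y (piM l nn X c) (i, k) = c (i, k)"
    proof (cases "i < l \<and> k < nn i")
      case True
      then have "piM l nn Y (piM l nn X c) (i, k) = (\<Sum>j<nn i. (\<Sum>j'<nn i. c (i, j') * X i j' j) * Y i j k)"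
        by (simp add: piM_def)
      also have "\<dots> = (\<Sum>j<nn i. \<Sum>j'<nn i. c (i, j') * X i j' j * Y i j k)"
        by (simp add: sum_distrib_right)
      also have "\<dots> = (\<Sum>j'<nn i. \<Sum>j<nn i. c (i, j') * X i j' j * Y i j k)"
        by (rule sum.swap)
      also have "\<dots> = (\<Sum>j'<nn i. c (i, j') * (\<Sum>j<nn i. X i j' j * Y i j k))"
        by (simp add: sum_distrib_left mult.assoc)
      also have "\<dots> = (\<Sum>j'<nn i. if j' = k then c (i, j') else 0)"
        by (rule sum.cong) (use XY True in auto)
      also have "\<dots> = c (i, k)"
        using True by (simp add: sum.delta')
      finally show ?thesis .
    qed (use c in \<open>auto simp: piM_def blockvecs_def\<close>)
  qed
  have "bij_betw (piM l nn M) (blockvecs l nn) (blockvecs l nn)"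
  proof (rule bij_betw_byWitness[where f'="piM l nn N"])
    show "\<forall>c\<in>blockvecs l nn. piM l nn N (piM l nn M c) = c"
      using inverse[of _ M N] N by simp
    show "\<forall>c\<in>blockvecs l nn. piM l nn M (piM l nn N c) = c"
      using inverse[of _ N M] N by simp
  qed (use into in blast)+
  moreover have "piM l nn M (\<lambda>x. f x + g x) = (\<lambda>y. piM l nn M f y + piM l nn M g y)" for f g
    by (rule ext, clarify) (simp add: piM_def distrib_right sum.distrib)
  moreover have "piM l nn M (\<lambda>x. c * f x) = (\<lambda>y. c * piM l nn M f y)" for c f
    by (rule ext, clarify) (simp add: piM_def sum_distrib_left mult.assoc)
  ultimately show ?thesis
    unfolding left_iso_def by blast
qed

context skew
begin

lemma interp_pi_AB:
  assumes A: "finite A" "P_independent \<sigma> \<delta> A" "card A = n"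
    and B: "finite B" "P_independent \<sigma> \<delta> B" "card B = n" and f: "f \<in> funspace A"
  shows "interp \<sigma> \<delta> B n (pi_AB \<sigma> \<delta> A B n f) = interp \<sigma> \<delta> A n f"
  unfolding pi_AB_def by (rule interp_eqI[OF B interp_spec(1)[OF A f] refl])

lemma pi_AB_left_iso:
  assumes A: "finite A" "P_independent \<sigma> \<delta> A" "card A = n"
    and B: "finite B" "P_independent \<sigma> \<delta> B" "card B = n"
  shows "left_iso (funspace A) (funspace B) (pi_AB \<sigma> \<delta> A B n)"
  unfolding left_iso_def
proof (intro conjI ballI allI)
  have "inj_on (pi_AB \<sigma> \<delta> A B n) (funspace A)"
  proof (rule inj_onI)
    fix f g assume f: "f \<in> funspace A" and g: "g \<in> funspace A"
      and "pi_AB \<sigma> \<delta> A B n f = pi_AB \<sigma> \<delta> A B n g"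
    then have "interp \<sigma> \<delta> A n f = interp \<sigma> \<delta> A n g"
      using interp_pi_AB[OF A B f] interp_pi_AB[OF A B g] by simp
    then show "f = g"
      using interp_spec(2)[OF A f] interp_spec(2)[OF A g] by metis
  qed
  moreover have "h \<in> pi_AB \<sigma> \<delta> A B n ` funspace A" if h: "h \<in> funspace B" for h
  proof -
    define f where "f = Eval_on \<sigma> \<delta> A (interp \<sigma> \<delta> B n h)"
    have "interp \<sigma> \<delta> A n f = interp \<sigma> \<delta> B n h"
      by (rule interp_eqI[OF A interp_spec(1)[OF B h]]) (simp add: f_def)
    then have "pi_AB \<sigma> \<delta> A B n f = h"
      using interp_spec(2)[OF B h] by (simp add: pi_AB_def)
    moreover have "f \<in> funspace A"
      by (simp add: f_def Eval_on_in_funspace)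
    ultimately show ?thesis
      by (rule image_eqI[OF sym])
  qed
  ultimately show "bij_betw (pi_AB \<sigma> \<delta> A B n) (funspace A) (funspace B)"
    unfolding bij_betw_def by (auto simp: pi_AB_def Eval_on_in_funspace)
next
  fix f g :: "'a \<Rightarrow> 'a" assume f: "f \<in> funspace A" and g: "g \<in> funspace A"
  show "pi_AB \<sigma> \<delta> A B n (\<lambda>x. f x + g x) = (\<lambda>y. pi_AB \<sigma> \<delta> A B n f y + pi_AB \<sigma> \<delta> A B n g y)"
    using Eval_on_linear[OF interp_spec(1)[OF A f] interp_spec(1)[OF A g], of B 1 1]
    by (simp add: pi_AB_def interp_add[OF A f g])
next
  fix c :: 'a and f :: "'a \<Rightarrow> 'a" assume f: "f \<in> funspace A"
  show "pi_AB \<sigma> \<delta> A B n (\<lambda>x. c * f x) = (\<lambda>y. c * pi_AB \<sigma> \<delta> A B n f y)"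
    using Eval_on_linear[OF interp_spec(1)[OF A f] interp_spec(1)[OF A f], of B c 0]
    by (simp add: pi_AB_def interp_scale[OF A f])
qed

lemma phi_eq:
  assumes S: "finite S" "P_independent \<sigma> \<delta> S" "card S = n"
    and en: "\<forall>i<l. bij_betw (\<lambda>j. skconj (a i) (\<alpha> i j)) {..<card (S \<inter> Cls \<sigma> \<delta> (a i))} (S \<inter> Cls \<sigma> \<delta> (a i))
               \<and> (\<forall>j<card (S \<inter> Cls \<sigma> \<delta> (a i)). \<alpha> i j \<noteq> 0)"
    and f: "f \<in> funspace S"
  shows "phi \<sigma> \<delta> l a S \<alpha> n f (i, j) = (if i < l \<and> j < card (S \<inter> Cls \<sigma> \<delta> (a i))
            then f (skconj (a i) (\<alpha> i j)) * \<alpha> i j else 0)"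
proof (cases "i < l \<and> j < card (S \<inter> Cls \<sigma> \<delta> (a i))")
  case True
  have "\<alpha> i j \<noteq> 0" "skconj (a i) (\<alpha> i j) \<in> S"
    using en True by (auto simp: bij_betw_def)
  note F = interp_spec[OF S f]
  have "Dapply \<sigma> \<delta> (interp \<sigma> \<delta> S n f) (a i) (\<alpha> i j)
      = Dapply \<sigma> \<delta> (interp \<sigma> \<delta> S n f) (skconj (a i) (\<alpha> i j)) 1 * \<alpha> i j"
    by (rule Dapply_eq_skconj) fact
  also have "Dapply \<sigma> \<delta> (interp \<sigma> \<delta> S n f) (skconj (a i) (\<alpha> i j)) 1 = f (skconj (a i) (\<alpha> i j))"
    using Eval_on_eq_Dapply[OF F(1)] F(2) \<open>skconj (a i) (\<alpha> i j) \<in> S\<close> by metis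
  finally show ?thesis
    using True by (simp add: phi_def)
qed (auto simp: phi_def)

lemma block_enumeration_bij:
  fixes l :: nat
  assumes en: "\<forall>i<l. bij_betw (\<lambda>j. skconj (a i) (\<alpha> i j)) {..<nn i} (S \<inter> Cls \<sigma> \<delta> (a i))"
    and cover: "S = (\<Union>i<l. S \<inter> Cls \<sigma> \<delta> (a i))"
    and dist: "\<forall>i<l. \<forall>j<l. i \<noteq> j \<longrightarrow> Cls \<sigma> \<delta> (a i) \<noteq> Cls \<sigma> \<delta> (a j)"
  shows "bij_betw (\<lambda>(i, j). skconj (a i) (\<alpha> i j)) (SIGMA i:{..<l}. {..<nn i}) S"
  unfolding bij_betw_def
proof
  show "inj_on (\<lambda>(i, j). skconj (a i) (\<alpha> i j)) (SIGMA i:{..<l}. {..<nn i})"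
  proof (rule inj_onI, clarsimp)
    fix i j i' j' assume ij: "i < l" "j < nn i" "i' < l" "j' < nn i'"
      and eq: "skconj (a i) (\<alpha> i j) = skconj (a i') (\<alpha> i' j')"
    have "skconj (a i) (\<alpha> i j) \<in> Cls \<sigma> \<delta> (a i)" "skconj (a i') (\<alpha> i' j') \<in> Cls \<sigma> \<delta> (a i')"
      using bij_betw_apply[OF en[rule_format, OF ij(1)], of j] bij_betw_apply[OF en[rule_format, OF ij(3)], of j'] ij
      by simp_all
    then have common: "skconj (a i) (\<alpha> i j) \<in> Cls \<sigma> \<delta> (a i) \<inter> Cls \<sigma> \<delta> (a i')"
      using eq by simp
    have "i = i'"
    proof (rule ccontr)
      assume "i \<noteq> i'"
      then have "Cls \<sigma> \<delta> (a i) \<inter> Cls \<sigma> \<delta> (a i') = {}"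
        using dist ij(1,3) by (intro Cls_disjoint) simp
      with common show False
        by simp
    qed
    moreover have "j = j'"
      using inj_onD[OF bij_betw_imp_inj_on[OF en[rule_format, OF ij(1)]], of j j'] eq ij \<open>i = i'\<close>
      by simp
    ultimately show "i = i' \<and> j = j'" ..
  qed
  show "(\<lambda>(i, j). skconj (a i) (\<alpha> i j)) ` (SIGMA i:{..<l}. {..<nn i}) = S"
  proof
    show "(\<lambda>(i, j). skconj (a i) (\<alpha> i j)) ` (SIGMA i:{..<l}. {..<nn i}) \<subseteq> S"
    proof clarsimp
      fix i j assume "i < l" "j < nn i"
      then show "skconj (a i) (\<alpha> i j) \<in> S"
        using bij_betw_apply[OF en[rule_format, OF \<open>i < l\<close>], of j] by simp
    qed
    show "S \<subseteq> (\<lambda>(i, j). skconj (a i) (\<alpha> i j)) ` (SIGMA i:{..<l}. {..<nn i})"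
    proof
      fix x assume "x \<in> S"
      then obtain i where i: "i < l" "x \<in> S \<inter> Cls \<sigma> \<delta> (a i)"
        using cover by blast
      then have "x \<in> (\<lambda>j. skconj (a i) (\<alpha> i j)) ` {..<nn i}"
        using bij_betw_imp_surj_on[OF en[rule_format, OF i(1)]] by simp
      then obtain j where "j < nn i" "x = skconj (a i) (\<alpha> i j)"
        by auto
      with i(1) show "x \<in> (\<lambda>(i, j). skconj (a i) (\<alpha> i j)) ` (SIGMA i:{..<l}. {..<nn i})"
        by (intro image_eqI[where x="(i, j)"]) simp_all
    qed
  qed
qed

lemma phi_left_iso:
  fixes l :: nat
  assumes S: "finite S" "P_independent \<sigma> \<delta> S" "card S = n"
    and en: "\<forall>i<l. bij_betw (\<lambda>j. skconj (a i) (\<alpha> i j)) {..<card (S \<inter> Cls \<sigma> \<delta> (a i))} (S \<inter> Cls \<sigma> \<delta> (a i))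
               \<and> (\<forall>j<card (S \<inter> Cls \<sigma> \<delta> (a i)). \<alpha> i j \<noteq> 0)"
    and cover: "S = (\<Union>i<l. S \<inter> Cls \<sigma> \<delta> (a i))"
    and dist: "\<forall>i<l. \<forall>j<l. i \<noteq> j \<longrightarrow> Cls \<sigma> \<delta> (a i) \<noteq> Cls \<sigma> \<delta> (a j)"
  shows "left_iso (funspace S) (blockvecs l (\<lambda>i. card (S \<inter> Cls \<sigma> \<delta> (a i)))) (phi \<sigma> \<delta> l a S \<alpha> n)"
proof -
  let ?I = "SIGMA i:{..<l}. {..<card (S \<inter> Cls \<sigma> \<delta> (a i))}"
  have e: "bij_betw (\<lambda>(i, j). skconj (a i) (\<alpha> i j)) ?I S"
    by (rule block_enumeration_bij) (use en cover dist in auto)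
  have w: "\<forall>p\<in>?I. case_prod \<alpha> p \<noteq> 0"
    using en by simp
  let ?h = "\<lambda>f p. if p \<in> ?I then f (case_prod (\<lambda>i j. skconj (a i) (\<alpha> i j)) p) * case_prod \<alpha> p else 0"
  have phi: "phi \<sigma> \<delta> l a S \<alpha> n f = ?h f" if "f \<in> funspace S" for f
  proof (rule ext, clarify)
    fix i j show "phi \<sigma> \<delta> l a S \<alpha> n f (i, j) =
      (if (i, j) \<in> ?I then f (skconj (a i) (\<alpha> i j)) * \<alpha> i j else 0)"
      using phi_eq[OF S en that, of i j] by simp
  qed
  have "left_iso (funspace S) (funspace ?I) (phi \<sigma> \<delta> l a S \<alpha> n)"
    using reindex_scale_left_iso[OF e w] left_iso_funspace_cong[of S "phi \<sigma> \<delta> l a S \<alpha> n" ?h] phi by blast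
  moreover have "blockvecs l (\<lambda>i. card (S \<inter> Cls \<sigma> \<delta> (a i))) = (funspace ?I :: (nat \<times> nat \<Rightarrow> 'a) set)"
    by (auto simp: blockvecs_def funspace_def)
  ultimately show ?thesis
    by simp
qed

lemma phi_pi_AB_commute:
  fixes l :: nat
  assumes A: "finite A" "P_independent \<sigma> \<delta> A" "card A = n"
    and B: "finite B" "P_independent \<sigma> \<delta> B" "card B = n"
    and parts: "\<forall>i<l. card (B \<inter> Cls \<sigma> \<delta> (a i)) = nn i" "\<forall>i<l. card (A \<inter> Cls \<sigma> \<delta> (a i)) = nn i"
    and M: "\<forall>i<l. (\<forall>j<nn i. \<forall>k<nn i. M i j k \<in> Kset \<sigma> \<delta> (a i)) \<and>
                   (\<forall>k<nn i. \<beta> i k = (\<Sum>j<nn i. \<alpha> i j * M i j k))"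
    and f: "f \<in> funspace A"
  shows "phi \<sigma> \<delta> l a B \<beta> n (pi_AB \<sigma> \<delta> A B n f) = piM l nn M (phi \<sigma> \<delta> l a A \<alpha> n f)"
proof (rule ext, clarify)
  fix i k
  define G where "G = interp \<sigma> \<delta> A n f"
  show "phi \<sigma> \<delta> l a B \<beta> n (pi_AB \<sigma> \<delta> A B n f) (i, k) = piM l nn M (phi \<sigma> \<delta> l a A \<alpha> n f) (i, k)"
  proof (cases "i < l \<and> k < nn i")
    case True
    then have "phi \<sigma> \<delta> l a B \<beta> n (pi_AB \<sigma> \<delta> A B n f) (i, k) = Dapply \<sigma> \<delta> G (a i) (\<beta> i k)"
      using parts by (simp add: phi_def interp_pi_AB[OF A B f] G_def)
    also have "\<dots> = (\<Sum>j<nn i. Dapply \<sigma> \<delta> G (a i) (\<alpha> i j) * M i j k)"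
      using M True by (simp add: Dapply_point_right_comb)
    also have "\<dots> = piM l nn M (phi \<sigma> \<delta> l a A \<alpha> n f) (i, k)"
      using True parts by (simp add: piM_def phi_def G_def)
    finally show ?thesis .
  qed (use parts in \<open>auto simp: phi_def piM_def\<close>)
qed

lemma P_basis_change:
  fixes l :: nat
  assumes A: "finite A" "P_independent \<sigma> \<delta> A" "card A = n"
    and B: "finite B" "P_independent \<sigma> \<delta> B" "card B = n"
    and AB: "A \<subseteq> P_closure \<sigma> \<delta> B" and BA: "B \<subseteq> P_closure \<sigma> \<delta> A"
    and cover: "A = (\<Union>i<l. A \<inter> Cls \<sigma> \<delta> (a i))" "B = (\<Union>i<l. B \<inter> Cls \<sigma> \<delta> (a i))"
    and dist: "\<forall>i<l. \<forall>j<l. i \<noteq> j \<longrightarrow> Cls \<sigma> \<delta> (a i) \<noteq> Cls \<sigma> \<delta> (a j)"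
    and enA: "\<forall>i<l. bij_betw (\<lambda>j. skconj (a i) (\<alpha> i j)) {..<card (A \<inter> Cls \<sigma> \<delta> (a i))} (A \<inter> Cls \<sigma> \<delta> (a i))
               \<and> (\<forall>j<card (A \<inter> Cls \<sigma> \<delta> (a i)). \<alpha> i j \<noteq> 0)"
    and enB: "\<forall>i<l. bij_betw (\<lambda>j. skconj (a i) (\<beta> i j)) {..<card (B \<inter> Cls \<sigma> \<delta> (a i))} (B \<inter> Cls \<sigma> \<delta> (a i))
               \<and> (\<forall>j<card (B \<inter> Cls \<sigma> \<delta> (a i)). \<beta> i j \<noteq> 0)"
  defines "nn \<equiv> \<lambda>i. card (A \<inter> Cls \<sigma> \<delta> (a i))"
  shows "\<exists>M. (\<forall>i<l. inv_matrix_in (Kset \<sigma> \<delta> (a i)) (nn i) (M i) \<and>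
                  (\<forall>k<nn i. \<beta> i k = (\<Sum>j<nn i. \<alpha> i j * M i j k))) \<and>
           left_iso (funspace A) (blockvecs l nn) (phi \<sigma> \<delta> l a A \<alpha> n) \<and>
           left_iso (funspace B) (blockvecs l nn) (phi \<sigma> \<delta> l a B \<beta> n) \<and>
           left_iso (funspace A) (funspace B) (pi_AB \<sigma> \<delta> A B n) \<and>
           left_iso (blockvecs l nn) (blockvecs l nn) (piM l nn M) \<and>
           (\<forall>f\<in>funspace A. phi \<sigma> \<delta> l a B \<beta> n (pi_AB \<sigma> \<delta> A B n f) = piM l nn M (phi \<sigma> \<delta> l a A \<alpha> n f))"
proof -
  have parts: "\<forall>i<l. card (B \<inter> Cls \<sigma> \<delta> (a i)) = nn i"
    using card_Int_Cls_eq[OF A(1,2) B(1,2) AB BA] by (simp add: nn_def)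
  have "\<forall>i\<in>{..<l}. \<exists>Mi. inv_matrix_in (Kset \<sigma> \<delta> (a i)) (nn i) Mi \<and>
      (\<forall>k<nn i. \<beta> i k = (\<Sum>j<nn i. \<alpha> i j * Mi j k))"
    using transition_matrix_exists[OF A(1,2) B(1,2) AB BA] enA enB parts by (simp add: nn_def)
  then obtain M where M: "\<forall>i\<in>{..<l}. inv_matrix_in (Kset \<sigma> \<delta> (a i)) (nn i) (M i) \<and>
      (\<forall>k<nn i. \<beta> i k = (\<Sum>j<nn i. \<alpha> i j * M i j k))"
    by (rule bchoice[THEN exE])
  then have Minv: "\<forall>i<l. inv_matrix_in (Kset \<sigma> \<delta> (a i)) (nn i) (M i)"
    by simp
  have "blockvecs l (\<lambda>i. card (B \<inter> Cls \<sigma> \<delta> (a i))) = (blockvecs l nn :: (nat \<times> nat \<Rightarrow> 'a) set)"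
    using parts by (auto simp: blockvecs_def)
  then have isoB: "left_iso (funspace B) (blockvecs l nn) (phi \<sigma> \<delta> l a B \<beta> n)"
    using phi_left_iso[OF B enB cover(2) dist] by simp
  have "\<forall>f\<in>funspace A. phi \<sigma> \<delta> l a B \<beta> n (pi_AB \<sigma> \<delta> A B n f) = piM l nn M (phi \<sigma> \<delta> l a A \<alpha> n f)"
    using M parts by (intro ballI phi_pi_AB_commute[OF A B]) (auto simp: inv_matrix_in_def nn_def)
  then show ?thesis
    using M isoB phi_left_iso[OF A enA cover(1) dist] pi_AB_left_iso[OF A B] piM_left_iso[OF Minv]
    unfolding nn_def by blast
qed

end

theorem mainTheorem9:
  fixes \<sigma> \<delta> :: "'a::division_ring \<Rightarrow> 'a" and \<Omega> A B :: "'a set"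
    and l :: nat and a :: "nat \<Rightarrow> 'a"
  assumes "ring_endo \<sigma>" and "sigma_derivation \<sigma> \<delta>"
    and "P_closed \<sigma> \<delta> \<Omega>" and "P_basis \<sigma> \<delta> \<Omega> A" and "P_basis \<sigma> \<delta> \<Omega> B" and "finite A"
    and "\<forall>i<l. \<forall>j<l. i \<noteq> j \<longrightarrow> Cls \<sigma> \<delta> (a i) \<noteq> Cls \<sigma> \<delta> (a j)"
    and "\<forall>i<l. A \<inter> Cls \<sigma> \<delta> (a i) \<noteq> {}" and "\<forall>i<l. B \<inter> Cls \<sigma> \<delta> (a i) \<noteq> {}"
    and "A = (\<Union>i<l. A \<inter> Cls \<sigma> \<delta> (a i))" and "B = (\<Union>i<l. B \<inter> Cls \<sigma> \<delta> (a i))"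
  shows "let n = Rk \<sigma> \<delta> \<Omega>; nn = (\<lambda>i. card (A \<inter> Cls \<sigma> \<delta> (a i))) in
    (\<forall>i<l. card (A \<inter> Cls \<sigma> \<delta> (a i)) = card (B \<inter> Cls \<sigma> \<delta> (a i))) \<and>
    n = (\<Sum>i<l. nn i) \<and>
    (\<forall>\<alpha> \<beta>.
      (\<forall>i<l. bij_betw (\<lambda>j. Dop \<sigma> \<delta> (a i) (\<alpha> i j) * inverse (\<alpha> i j))
                 {..<card (A \<inter> Cls \<sigma> \<delta> (a i))} (A \<inter> Cls \<sigma> \<delta> (a i)) \<and>
             (\<forall>j<card (A \<inter> Cls \<sigma> \<delta> (a i)). \<alpha> i j \<noteq> 0)) \<and>
      (\<forall>i<l. bij_betw (\<lambda>j. Dop \<sigma> \<delta> (a i) (\<beta> i j) * inverse (\<beta> i j))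
                 {..<card (B \<inter> Cls \<sigma> \<delta> (a i))} (B \<inter> Cls \<sigma> \<delta> (a i)) \<and>
             (\<forall>j<card (B \<inter> Cls \<sigma> \<delta> (a i)). \<beta> i j \<noteq> 0))
      \<longrightarrow> (\<exists>M. (\<forall>i<l. inv_matrix_in (Kset \<sigma> \<delta> (a i)) (nn i) (M i) \<and>
                     (\<forall>k<nn i. \<beta> i k = (\<Sum>j<nn i. \<alpha> i j * M i j k))) \<and>
              left_iso (funspace A) (blockvecs l nn) (phi \<sigma> \<delta> l a A \<alpha> n) \<and>
              left_iso (funspace B) (blockvecs l nn) (phi \<sigma> \<delta> l a B \<beta> n) \<and>
              left_iso (funspace A) (funspace B) (pi_AB \<sigma> \<delta> A B n) \<and>
              left_iso (blockvecs l nn) (blockvecs l nn) (piM l nn M) \<and>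
              (\<forall>f\<in>funspace A. phi \<sigma> \<delta> l a B \<beta> n (pi_AB \<sigma> \<delta> A B n f) =
                               piM l nn M (phi \<sigma> \<delta> l a A \<alpha> n f))))"
proof -
  interpret skew \<sigma> \<delta>
    using assms(1,2) by (rule skew.intro)
  have A: "finite A" "P_independent \<sigma> \<delta> A" and AB: "A \<subseteq> P_closure \<sigma> \<delta> B"
    using assms(4,5,6) by (auto simp: P_basis_def)
  have B: "finite B" "P_independent \<sigma> \<delta> B" and BA: "B \<subseteq> P_closure \<sigma> \<delta> A"
    using assms(4,5) P_basis_finite_card_eq[OF assms(4,6,5)] by (auto simp: P_basis_def)
  have n: "card A = Rk \<sigma> \<delta> \<Omega>" "card B = Rk \<sigma> \<delta> \<Omega>"
    using Rk_eq_card[OF assms(4,6)] P_basis_finite_card_eq[OF assms(4,6,5)] by simp_all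
  show ?thesis
    unfolding Let_def
  proof (intro conjI allI impI, goal_cases)
    case (1 i)
    show ?case
      using card_Int_Cls_eq[OF A B AB BA] .
  next
    case 2
    show ?case
      using card_eq_sum_Int_Cls[OF A(1) assms(10,7)] n by simp
  next
    case (3 \<alpha> \<beta>)
    then show ?case
      using P_basis_change[OF A n(1) B n(2) AB BA assms(10,11,7), of \<alpha> \<beta>] by (simp add: skconj_def)
  qed
qed

end
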